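(* Let $G=(V,E)$ be a finite, connected, bipartite cubic graph and let $n>0$. Then the transition matrix $P_{G,n}$ on $\mathcal R(G)$ (defined in the context) is ergodic, i.e. for all $s,s'\in\mathcal R(G)$ the chain started at $s$ visits $s'$ with positive probability.
   Context: Let $G=(V,E)$ be a finite, connected, bipartite cubic (3-regular) graph and $n>0$. For $A\subseteq E$ and $w\in V$ let $d_w(A)$ be the number of edges of $A$ incident to $w$, and let $\partial A$ be the set of vertices $w$ with $d_w(A)$ odd. Let $\mathcal R(G)$ be the set of ordered triples $(A,u,v)$ with $A\subseteq E$, $u,v\in V$, such that $\partial A=\{u,v\}$ if $u\ne v$ and $\partial A=\emptyset$ if $u=v$, $d_w(A)\ge1$ for all $w\in V$, and $d_u(A)+d_v(A)\ge4$. For $(A,u,v)\in\mathcal R(G)$ let $C_{uv}(A)$ be the connected component of $(V,A)$ containing $u$ (and $v$). Partition $\mathcal R(G)$ into: $\mathcal E$, the states where $C_{uv}(A)$ is a cycle (equivalently $u=v$); $\mathcal T$, where $C_{uv}(A)$ is a tadpole graph (a cycle with a path attached at one of its endpoints; equivalently $\{d_u(A),d_v(A)\}=\{1,3\}$); $\Theta$, where $C_{uv}(A)$ is a theta graph (two degree-3 vertices joined by three internally vertex-disjoint paths); $\mathcal D$, where $C_{uv}(A)$ is a dumbbell graph (two vertex-disjoint cycles joined by a path of length $\ge1$). An edge of $A$ is a bridge if deleting it from $(V,A)$ increases the number of connected components. $\triangle$ denotes symmetric difference. The Markov chain $P_{G,n}$ on $\mathcal R(G)$ is defined as follows: from the state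 $(A,u,v)$, for each edge $e=uu'\in E$ incident to $u$ it moves to $(A\triangle e,u',v)$, and for each edge $e=vv'\in E$ incident to $v$ it moves to $(A\triangle e,u,v')$, where such a move (along edge $e$ incident to the moved defect) has probability $1/2$ if $(A,u,v)\in\mathcal E\cup\mathcal T$ and $e\notin A$; $1/6$ if $(A,u,v)\in\Theta$; $n/(2(n+2))$ if $(A,u,v)\in\mathcal D$ and $e$ is a bridge of $(V,A)$; $1/(2(n+2))$ if $(A,u,v)\in\mathcal D$ and $e\in A$ is not a bridge; and $0$ otherwise. (If $u=v$, the two moves along the unique edge $e\notin A$ at $u$ lead to the distinct states $(A\cup e,u',u)$ and $(A\cup e,u,u')$.) All other transitions, including all identity transitions, have probability $0$. "Ergodic" means irreducible. *)

theory Defs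
  imports Complex_Main
begin

definition simple_graph :: "'a set \<Rightarrow> 'a set set \<Rightarrow> bool" where
  "simple_graph V E \<longleftrightarrow> finite V \<and>
     (\<forall>e\<in>E. \<exists>x y. x \<in> V \<and> y \<in> V \<and> x \<noteq> y \<and> e = {x, y})"

definition incident :: "'a set set \<Rightarrow> 'a \<Rightarrow> 'a set set" where
  "incident F w = {e \<in> F. w \<in> e}"

definition deg :: "'a set set \<Rightarrow> 'a \<Rightarrow> nat" where
  "deg F w = card (incident F w)"

definition cubic :: "'a set \<Rightarrow> 'a set set \<Rightarrow> bool" where
  "cubic V E \<longleftrightarrow> (\<forall>w\<in>V. deg E w = 3)"

definition adj_rel :: "'a set set \<Rightarrow> ('a \<times> 'a) set" where
  "adj_rel F = {(x, y). {x, y} \<in> F}"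

definition connected_graph :: "'a set \<Rightarrow> 'a set set \<Rightarrow> bool" where
  "connected_graph V E \<longleftrightarrow> V \<noteq> {} \<and> (\<forall>x\<in>V. \<forall>y\<in>V. (x, y) \<in> (adj_rel E)\<^sup>*)"

definition bipartite :: "'a set \<Rightarrow> 'a set set \<Rightarrow> bool" where
  "bipartite V E \<longleftrightarrow> (\<exists>X. X \<subseteq> V \<and> (\<forall>e\<in>E. card (e \<inter> X) = 1))"

definition comp_verts :: "'a set set \<Rightarrow> 'a \<Rightarrow> 'a set" where
  "comp_verts A u = {w. (u, w) \<in> (adj_rel A)\<^sup>*}"

definition comp_edges :: "'a set set \<Rightarrow> 'a \<Rightarrow> 'a set set" where
  "comp_edges A u = {e \<in> A. e \<subseteq> comp_verts A u}"

definition num_components :: "'a set \<Rightarrow> 'a set set \<Rightarrow> nat" where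
  "num_components V A = card ((\<lambda>w. comp_verts A w) ` V)"

definition is_bridge :: "'a set \<Rightarrow> 'a set set \<Rightarrow> 'a set \<Rightarrow> bool" where
  "is_bridge V A e \<longleftrightarrow> e \<in> A \<and> num_components V (A - {e}) > num_components V A"

definition odd_set :: "'a set \<Rightarrow> 'a set set \<Rightarrow> 'a set" where
  "odd_set V A = {w \<in> V. odd (deg A w)}"

definition path_edges :: "'a list \<Rightarrow> 'a set set" where
  "path_edges xs = {{xs ! i, xs ! Suc i} | i. Suc i < length xs}"

definition is_path :: "'a set set \<Rightarrow> 'a list \<Rightarrow> bool" where
  "is_path F xs \<longleftrightarrow> xs \<noteq> [] \<and> distinct xs \<and> path_edges xs \<subseteq> F"

definition cycle_edges :: "'a list \<Rightarrow> 'a set set" where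
  "cycle_edges xs = insert {last xs, hd xs} (path_edges xs)"

definition is_cycle :: "'a set set \<Rightarrow> 'a list \<Rightarrow> bool" where
  "is_cycle F xs \<longleftrightarrow> length xs \<ge> 3 \<and> distinct xs \<and> cycle_edges xs \<subseteq> F"

definition cycle_graph :: "'a set \<Rightarrow> 'a set set \<Rightarrow> bool" where
  "cycle_graph W F \<longleftrightarrow> (\<exists>c. is_cycle F c \<and> W = set c \<and> F = cycle_edges c)"

definition tadpole_graph :: "'a set \<Rightarrow> 'a set set \<Rightarrow> bool" where
  "tadpole_graph W F \<longleftrightarrow> (\<exists>c p. is_cycle F c \<and> is_path F p \<and> length p \<ge> 2 \<and>
      set p \<inter> set c = {hd p} \<and>
      W = set c \<union> set p \<and> F = cycle_edges c \<union> path_edges p)"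

definition theta_graph :: "'a set \<Rightarrow> 'a set set \<Rightarrow> bool" where
  "theta_graph W F \<longleftrightarrow> (\<exists>x y p1 p2 p3. x \<noteq> y \<and>
      is_path F p1 \<and> is_path F p2 \<and> is_path F p3 \<and>
      hd p1 = x \<and> hd p2 = x \<and> hd p3 = x \<and> last p1 = y \<and> last p2 = y \<and> last p3 = y \<and>
      p1 \<noteq> p2 \<and> p1 \<noteq> p3 \<and> p2 \<noteq> p3 \<and>
      set p1 \<inter> set p2 = {x, y} \<and> set p1 \<inter> set p3 = {x, y} \<and> set p2 \<inter> set p3 = {x, y} \<and>
      W = set p1 \<union> set p2 \<union> set p3 \<and>
      F = path_edges p1 \<union> path_edges p2 \<union> path_edges p3)"

definition dumbbell_graph :: "'a set \<Rightarrow> 'a set set \<Rightarrow> bool" where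
  "dumbbell_graph W F \<longleftrightarrow> (\<exists>c1 c2 p. is_cycle F c1 \<and> is_cycle F c2 \<and> set c1 \<inter> set c2 = {} \<and>
      is_path F p \<and> length p \<ge> 2 \<and>
      set p \<inter> set c1 = {hd p} \<and> set p \<inter> set c2 = {last p} \<and>
      W = set c1 \<union> set c2 \<union> set p \<and>
      F = cycle_edges c1 \<union> cycle_edges c2 \<union> path_edges p)"

type_synonym 'a state = "'a set set \<times> 'a \<times> 'a"

definition states :: "'a set \<Rightarrow> 'a set set \<Rightarrow> 'a state set" where
  "states V E = {(A, u, v). A \<subseteq> E \<and> u \<in> V \<and> v \<in> V \<and>
     (if u \<noteq> v then odd_set V A = {u, v} else odd_set V A = {}) \<and>
     (\<forall>w\<in>V. deg A w \<ge> 1) \<and> deg A u + deg A v \<ge> 4}"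

definition class_E :: "'a set \<Rightarrow> 'a set set \<Rightarrow> 'a state set" where
  "class_E V E = {(A, u, v) \<in> states V E. cycle_graph (comp_verts A u) (comp_edges A u)}"

definition class_T :: "'a set \<Rightarrow> 'a set set \<Rightarrow> 'a state set" where
  "class_T V E = {(A, u, v) \<in> states V E. tadpole_graph (comp_verts A u) (comp_edges A u)}"

definition class_Theta :: "'a set \<Rightarrow> 'a set set \<Rightarrow> 'a state set" where
  "class_Theta V E = {(A, u, v) \<in> states V E. theta_graph (comp_verts A u) (comp_edges A u)}"

definition class_D :: "'a set \<Rightarrow> 'a set set \<Rightarrow> 'a state set" where
  "class_D V E = {(A, u, v) \<in> states V E. dumbbell_graph (comp_verts A u) (comp_edges A u)}"

definition sym_diff :: "'b set \<Rightarrow> 'b set \<Rightarrow> 'b set" where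
  "sym_diff X Y = (X - Y) \<union> (Y - X)"

text \<open>Probability of a move along edge e (incident to the moved defect) from state s.\<close>
definition move_prob :: "'a set \<Rightarrow> 'a set set \<Rightarrow> real \<Rightarrow> 'a state \<Rightarrow> 'a set \<Rightarrow> real" where
  "move_prob V E n s e =
     (case s of (A, u, v) \<Rightarrow>
       if s \<in> class_E V E \<union> class_T V E then (if e \<notin> A then 1/2 else 0)
       else if s \<in> class_Theta V E then 1/6
       else if s \<in> class_D V E then
         (if e \<in> A \<and> is_bridge V A e then n / (2 * (n + 2))
          else if e \<in> A then 1 / (2 * (n + 2)) else 0)
       else 0)"

definition trans_prob :: "'a set \<Rightarrow> 'a set set \<Rightarrow> real \<Rightarrow> 'a state \<Rightarrow> 'a state \<Rightarrow> real" where
  "trans_prob V E n s s' =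
     (case s of (A, u, v) \<Rightarrow>
       (\<Sum>u'\<in>{u'. {u, u'} \<in> E}.
          if s' = (sym_diff A {{u, u'}}, u', v) then move_prob V E n s {u, u'} else 0)
     + (\<Sum>v'\<in>{v'. {v, v'} \<in> E}.
          if s' = (sym_diff A {{v, v'}}, u, v') then move_prob V E n s {v, v'} else 0))"

definition irreducible_chain :: "'s set \<Rightarrow> ('s \<Rightarrow> 's \<Rightarrow> real) \<Rightarrow> bool" where
  "irreducible_chain S P \<longleftrightarrow>
     (\<forall>s\<in>S. \<forall>s'\<in>S. (s, s') \<in> {(x, y). x \<in> S \<and> y \<in> S \<and> P x y > 0}\<^sup>*)"

end

theory Submission
  imports Defs "HOL-Library.Transitive_Closure_Table"
begin

(*
  Call a state (A,u,v) saturated if d_u(A) = d_v(A) = 3.  Every state of R(G) is either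
  diagonal (u = v, degree 2), has defect degrees {1,3}, or is saturated.  A "move" adds an
  absent edge of G at a defect of an unsaturated state, or deletes an edge of A at a defect of a
  saturated state.  Moves stay in R(G) and are reversible.

  1. Classification (maximal walks): unsaturated states lie in E or T, saturated states lie in
     Theta or D and not in E or T.  Hence every move has positive transition probability.
  2. Connectivity: fix a 2-factor F.  Every state reaches a diagonal state (F,x,x) by moves that
     shrink the symmetric difference with F, and a diagonal defect can be moved across every
     edge of the connected graph G.  Since moves are reversible, all states are connected.
  3. A 2-factor exists as soon as R(G) is non-empty: from a saturated state, alternating paths
     lead to a diagonal state, because otherwise Hall's condition of the cubic bipartite graph
     would be violated.
*)

lemma incident_mono: "F \<subseteq> G \<Longrightarrow> incident F x \<subseteq> incident G x"
  unfolding incident_def by auto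

lemma finite_incident: "finite F \<Longrightarrow> finite (incident F x)"
  unfolding incident_def by auto

lemma incident_Diff: "incident (F - D) x = incident F x - D"
  unfolding incident_def by auto

lemma incident_insert: "incident (insert e F) x = (if x \<in> e then insert e (incident F x) else incident F x)"
  unfolding incident_def by auto

lemma deg_insert: "finite F \<Longrightarrow> e \<notin> F \<Longrightarrow> deg (insert e F) x = (if x \<in> e then Suc (deg F x) else deg F x)"
  unfolding deg_def incident_insert by (auto simp: finite_incident incident_def)

lemma deg_remove: "finite F \<Longrightarrow> e \<in> F \<Longrightarrow> deg (F - {e}) x = (if x \<in> e then deg F x - 1 else deg F x)"
  unfolding deg_def incident_Diff by (auto simp: finite_incident incident_def)

lemma deg_mono: "finite G \<Longrightarrow> F \<subseteq> G \<Longrightarrow> deg F x \<le> deg G x"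
  unfolding deg_def by (intro card_mono finite_incident incident_mono) auto

lemma card2_eq_pair: "finite X \<Longrightarrow> card X = 2 \<Longrightarrow> a \<in> X \<Longrightarrow> b \<in> X \<Longrightarrow> a \<noteq> b \<Longrightarrow> X = {a,b}"
  by (metis card_subset_eq empty_subsetI insert_subset card_2_iff)

lemma card3_eq_triple:
  "finite X \<Longrightarrow> card X = 3 \<Longrightarrow> a \<in> X \<Longrightarrow> b \<in> X \<Longrightarrow> c \<in> X \<Longrightarrow> a \<noteq> b \<Longrightarrow> a \<noteq> c \<Longrightarrow> b \<noteq> c
    \<Longrightarrow> X = {a,b,c}"
  by (intro card_subset_eq[symmetric]) auto

lemma card_le2_sub: "X \<subseteq> {a,b} \<Longrightarrow> card X \<le> 2"
  using card_mono[of "{a,b}" X] by (cases "a = b") auto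

definition doubleton_edges :: "'a set set \<Rightarrow> bool" where
  "doubleton_edges F \<longleftrightarrow> (\<forall>e\<in>F. \<exists>x y. x \<noteq> y \<and> e = {x, y})"

lemma doubleton_edges_subset: "doubleton_edges G \<Longrightarrow> F \<subseteq> G \<Longrightarrow> doubleton_edges F"
  unfolding doubleton_edges_def by auto

lemma deg1_edge:
  assumes "deg F a = 1" "doubleton_edges F" "finite F"
  obtains w where "incident F a = {{a,w}}" "a \<noteq> w" "{a,w} \<in> F"
proof -
  obtain e where e: "incident F a = {e}" using assms unfolding deg_def by (auto simp: card_1_singleton_iff)
  then have "e \<in> F" "a \<in> e" unfolding incident_def by auto
  then obtain x y where "x \<noteq> y" "e = {x,y}" using assms unfolding doubleton_edges_def by auto
  then obtain w where "e = {a,w}" "a \<noteq> w" using \<open>a \<in> e\<close> by auto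
  then show ?thesis using that e \<open>e \<in> F\<close> by auto
qed

lemma path_edges_single[simp]: "path_edges [x] = {}" unfolding path_edges_def by auto

lemma path_edges_Cons: "xs \<noteq> [] \<Longrightarrow> path_edges (x # xs) = insert {x, hd xs} (path_edges xs)"
proof -
  assume ne: "xs \<noteq> []"
  show ?thesis
  proof (rule set_eqI, rule iffI)
    fix e assume "e \<in> path_edges (x # xs)"
    then obtain i where i: "e = {(x#xs) ! i, (x#xs) ! Suc i}" "Suc i < length (x#xs)" unfolding path_edges_def by auto
    show "e \<in> insert {x, hd xs} (path_edges xs)"
    proof (cases i)
      case 0 then show ?thesis using i ne by (simp add: hd_conv_nth)
    next
      case (Suc j) then show ?thesis using i unfolding path_edges_def by auto
    qed
  next
    fix e assume "e \<in> insert {x, hd xs} (path_edges xs)"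
    then show "e \<in> path_edges (x # xs)"
    proof
      assume "e = {x, hd xs}"
      then have "e = {(x#xs) ! 0, (x#xs) ! Suc 0}" using ne by (simp add: hd_conv_nth)
      then show ?thesis unfolding path_edges_def using ne by force
    next
      assume "e \<in> path_edges xs"
      then obtain i where "e = {xs ! i, xs ! Suc i}" "Suc i < length xs" unfolding path_edges_def by auto
      then have "e = {(x#xs) ! Suc i, (x#xs) ! Suc (Suc i)}" "Suc (Suc i) < length (x#xs)" by auto
      then show ?thesis unfolding path_edges_def by blast
    qed
  qed
qed

lemma path_edges_subset: "e \<in> path_edges xs \<Longrightarrow> e \<subseteq> set xs"
  unfolding path_edges_def by auto

lemma path_edges_two: "e \<in> path_edges xs \<Longrightarrow> \<exists>i. Suc i < length xs \<and> e = {xs!i, xs!Suc i}"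
  unfolding path_edges_def by auto

lemma path_edge_in: "Suc i < length p \<Longrightarrow> {p!i, p!Suc i} \<in> path_edges p"
  unfolding path_edges_def by blast

lemma path_edges_rev: "path_edges (rev xs) = path_edges xs"
proof -
  have 1: "path_edges (rev xs) \<subseteq> path_edges xs" for xs :: "'a list"
  proof
    fix e assume "e \<in> path_edges (rev xs)"
    then obtain i where i: "Suc i < length xs" "e = {rev xs ! i, rev xs ! Suc i}" unfolding path_edges_def by auto
    define j where "j = length xs - Suc (Suc i)"
    have "rev xs ! i = xs ! Suc j" "rev xs ! Suc i = xs ! j" using i by (auto simp: rev_nth j_def Suc_diff_Suc)
    then have "e = {xs ! j, xs ! Suc j}" "Suc j < length xs" using i by (auto simp: j_def)
    then show "e \<in> path_edges xs" unfolding path_edges_def by blast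
  qed
  show ?thesis using 1[of xs] 1[of "rev xs"] by auto
qed

lemma edge_nth:
  assumes "distinct p" "e \<in> path_edges p" "i < length p" "p!i \<in> e"
  shows "(0 < i \<and> e = {p!(i-1), p!i}) \<or> (Suc i < length p \<and> e = {p!i, p!Suc i})"
proof -
  obtain j where j: "Suc j < length p" "e = {p!j, p!Suc j}" using path_edges_two[OF assms(2)] by blast
  have "p!i = p!j \<or> p!i = p!Suc j" using assms(4) j by auto
  then show ?thesis
  proof
    assume "p!i = p!j"
    then have "i = j" using nth_eq_iff_index_eq[OF assms(1) assms(3), of j] j by simp
    then show ?thesis using j by simp
  next
    assume "p!i = p!Suc j"
    then have "i = Suc j" using nth_eq_iff_index_eq[OF assms(1) assms(3), of "Suc j"] j by simp
    then show ?thesis using j by simp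
  qed
qed

lemma last_edge:
  assumes "distinct p" "2 \<le> length p" "e \<in> path_edges p" "last p \<in> e"
  shows "e = {p!(length p - 2), last p}"
proof -
  define k where "k = length p - 1"
  have k: "k < length p" "Suc k = length p" "0 < k" "k - 1 = length p - 2" using assms(2) unfolding k_def by auto
  have ne: "p \<noteq> []" using assms(2) by auto
  have l: "last p = p!k" using ne unfolding k_def by (simp add: last_conv_nth)
  have "(0 < k \<and> e = {p!(k-1), p!k}) \<or> (Suc k < length p \<and> e = {p!k, p!Suc k})"
    using edge_nth[OF assms(1) assms(3) k(1)] assms(4) l by simp
  then have "e = {p!(k-1), p!k}" using k(2) by auto
  then show ?thesis using l k(4) by simp
qed

lemma hd_edge:
  assumes "distinct p" "2 \<le> length p" "e \<in> path_edges p" "hd p \<in> e"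
  shows "e = {hd p, p!1}"
proof -
  have ne: "p \<noteq> []" using assms(2) by auto
  have h: "hd p = p!0" using ne by (simp add: hd_conv_nth)
  show ?thesis using edge_nth[OF assms(1) assms(3), of 0] assms(2,4) h ne by auto
qed

lemma last_edge_in: "2 \<le> length p \<Longrightarrow> {p!(length p - 2), last p} \<in> path_edges p"
proof -
  assume "2 \<le> length p"
  then have "Suc (length p - 2) < length p" "Suc (length p - 2) = length p - 1" by auto
  moreover have "p \<noteq> []" using \<open>2 \<le> length p\<close> by auto
  ultimately show ?thesis using path_edge_in[of "length p - 2" p] by (simp add: last_conv_nth)
qed

lemma hd_edge_in: "2 \<le> length p \<Longrightarrow> {hd p, p!1} \<in> path_edges p"
proof -
  assume "2 \<le> length p"
  then have "p \<noteq> []" "Suc 0 < length p" by auto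
  then show ?thesis using path_edge_in[of 0 p] by (simp add: hd_conv_nth)
qed

lemma last_neq_hd: "distinct p \<Longrightarrow> 2 \<le> length p \<Longrightarrow> last p \<noteq> hd p"
proof -
  assume d: "distinct p" "2 \<le> length p"
  then have ne: "p \<noteq> []" and k: "length p - 1 < length p" "length p - 1 \<noteq> 0" by auto
  have "p!(length p - 1) \<noteq> p!0" using nth_eq_iff_index_eq[OF d(1) k(1), of 0] k ne by simp
  then show ?thesis using ne by (simp add: last_conv_nth hd_conv_nth)
qed

lemma set_nth_lt_last:
  assumes "distinct q" "x \<in> set q" "x \<noteq> last q"
  obtains i where "i < length q - 1" "q!i = x"
proof -
  obtain i where i: "i < length q" "q!i = x" using assms(2) by (auto simp: in_set_conv_nth)
  have ne: "q \<noteq> []" using assms(2) by auto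
  have "i \<noteq> length q - 1" using i assms(3) ne by (auto simp: last_conv_nth)
  then have "i < length q - 1" using i(1) by simp
  then show ?thesis using that i(2) by blast
qed

lemma path_vertex_in_edge:
  assumes "2 \<le> length p" "x \<in> set p"
  shows "\<exists>e\<in>path_edges p. x \<in> e"
proof -
  obtain i where i: "i < length p" "p!i = x" using assms by (auto simp: in_set_conv_nth)
  show ?thesis
  proof (cases "Suc i < length p")
    case True
    then show ?thesis using i unfolding path_edges_def by blast
  next
    case False
    then have "i = Suc (i - 1)" "Suc (i-1) < length p" using i assms by auto
    then have "{p!(i-1), p!i} \<in> path_edges p" unfolding path_edges_def by (metis (mono_tags, lifting) mem_Collect_eq)
    then show ?thesis using i by auto
  qed
qed

lemma cycle_edges_sub: "c \<noteq> [] \<Longrightarrow> e \<in> cycle_edges c \<Longrightarrow> e \<subseteq> set c"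
  unfolding cycle_edges_def using path_edges_subset by fastforce

lemma path_edges_sub_cycle_edges: "path_edges c \<subseteq> cycle_edges c" unfolding cycle_edges_def by auto

lemma is_cycle_sub: "is_cycle A c \<Longrightarrow> cycle_edges c \<subseteq> L \<Longrightarrow> is_cycle L c"
  unfolding is_cycle_def by auto

lemma cycle_deg_le2:
  assumes "distinct c" "3 \<le> length c"
  shows "card (incident (cycle_edges c) x) \<le> 2"
proof (cases "x \<in> set c")
  case False
  then have "incident (cycle_edges c) x = {}" using cycle_edges_sub[of c] assms unfolding incident_def by fastforce
  then show ?thesis by simp
next
  case True
  then obtain i where i: "i < length c" "c!i = x" by (auto simp: in_set_conv_nth)
  have ne: "c \<noteq> []" using assms by auto
  have hd: "hd c = c!0" using ne by (simp add: hd_conv_nth)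
  have lst: "last c = c!(length c - 1)" using ne by (simp add: last_conv_nth)
  have pe: "e \<in> path_edges c \<Longrightarrow> x \<in> e \<Longrightarrow> (0 < i \<and> e = {c!(i-1), x}) \<or> (Suc i < length c \<and> e = {x, c!Suc i})" for e
    using edge_nth[OF assms(1) _ i(1)] i(2) by blast
  have inc: "incident (cycle_edges c) x \<subseteq> insert {last c, hd c} {e \<in> path_edges c. x \<in> e}"
    unfolding incident_def cycle_edges_def by auto
  show ?thesis
  proof (cases "i = 0")
    case True
    have "incident (cycle_edges c) x \<subseteq> {{last c, hd c}, {x, c!Suc i}}" using inc pe True by auto
    then show ?thesis by (rule card_le2_sub)
  next
    case False
    show ?thesis
    proof (cases "Suc i = length c")
      case True
      have "incident (cycle_edges c) x \<subseteq> {{last c, hd c}, {c!(i-1), x}}" using inc pe True by auto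
      then show ?thesis by (rule card_le2_sub)
    next
      case False2: False
      have "x \<noteq> hd c" using hd i \<open>i \<noteq> 0\<close> nth_eq_iff_index_eq[OF assms(1) i(1), of 0] ne by auto
      moreover have "x \<noteq> last c" using lst i False2 nth_eq_iff_index_eq[OF assms(1) i(1), of "length c - 1"] ne by auto
      ultimately have nl: "x \<notin> {last c, hd c}" by simp
      have "incident (cycle_edges c) x \<subseteq> {{c!(i-1), x}, {x, c!Suc i}}"
      proof
        fix e assume "e \<in> incident (cycle_edges c) x"
        then have "e \<in> insert {last c, hd c} {e \<in> path_edges c. x \<in> e}" "x \<in> e" using inc unfolding incident_def by auto
        then have "e \<in> path_edges c" "x \<in> e" using nl by auto
        then show "e \<in> {{c!(i-1), x}, {x, c!Suc i}}" using pe by blast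
      qed
      then show ?thesis by (rule card_le2_sub)
    qed
  qed
qed

lemma tadpole_tail_end_incident:
  assumes "is_path F p" "2 \<le> length p" "set p \<inter> set c = {hd p}" "c \<noteq> []"
  shows "incident (cycle_edges c \<union> path_edges p) (last p) = {{p!(length p - 2), last p}}"
proof -
  have d: "distinct p" using assms(1) unfolding is_path_def by simp
  define k where "k = length p - 1"
  have k: "k < length p" "0 < k" using assms(2) unfolding k_def by auto
  have ne: "p \<noteq> []" using assms(2) by auto
  have l: "last p = p!k" using ne unfolding k_def by (simp add: last_conv_nth)
  have h: "hd p = p!0" using ne by (simp add: hd_conv_nth)
  have "p!k \<noteq> p!0" using nth_eq_iff_index_eq[OF d k(1), of 0] k ne by simp
  then have lh: "last p \<noteq> hd p" using l h by simp
  have "last p \<in> set p" using l k(1) by simp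
  then have lc: "last p \<notin> set c" using assms(3) lh by blast
  have 1: "e \<in> cycle_edges c \<Longrightarrow> last p \<notin> e" for e using cycle_edges_sub[OF assms(4), of e] lc by blast
  have 2: "e \<in> path_edges p \<Longrightarrow> last p \<in> e \<Longrightarrow> e = {p!(length p - 2), last p}" for e using last_edge[OF d assms(2)] by blast
  have 3: "{p!(length p - 2), last p} \<in> path_edges p" using last_edge_in[OF assms(2)] .
  show ?thesis
  proof (rule set_eqI, rule iffI)
    fix e assume "e \<in> incident (cycle_edges c \<union> path_edges p) (last p)"
    then have "e \<in> cycle_edges c \<union> path_edges p" "last p \<in> e" unfolding incident_def by auto
    then show "e \<in> {{p!(length p - 2), last p}}" using 1 2 by blast
  next
    fix e assume "e \<in> {{p!(length p - 2), last p}}"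
    then show "e \<in> incident (cycle_edges c \<union> path_edges p) (last p)" using 3 unfolding incident_def by auto
  qed
qed

lemma adj_rel_sym: "(x,y) \<in> adj_rel F \<Longrightarrow> (y,x) \<in> adj_rel F"
  unfolding adj_rel_def by (auto simp: insert_commute)

lemma adj_rtrancl_sym: "(x,y) \<in> (adj_rel F)\<^sup>* \<Longrightarrow> (y,x) \<in> (adj_rel F)\<^sup>*"
proof (induction rule: rtrancl_induct)
  case base then show ?case by simp
next
  case (step y z) then show ?case using adj_rel_sym by (meson converse_rtrancl_into_rtrancl)
qed

lemma adj_rtrancl_mono: "F \<subseteq> G \<Longrightarrow> (x,y) \<in> (adj_rel F)\<^sup>* \<Longrightarrow> (x,y) \<in> (adj_rel G)\<^sup>*"
proof -
  assume "F \<subseteq> G" "(x,y) \<in> (adj_rel F)\<^sup>*"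
  moreover have "adj_rel F \<subseteq> adj_rel G" using \<open>F \<subseteq> G\<close> unfolding adj_rel_def by auto
  ultimately show ?thesis using rtrancl_mono by blast
qed

lemma path_reach:
  assumes "path_edges xs \<subseteq> L" "i < length xs"
  shows "(xs!0, xs!i) \<in> (adj_rel L)\<^sup>*"
  using assms(2)
proof (induction i)
  case 0 then show ?case by simp
next
  case (Suc i)
  then have "{xs!i, xs!Suc i} \<in> L" using assms(1) unfolding path_edges_def by blast
  then have "(xs!i, xs!Suc i) \<in> adj_rel L" unfolding adj_rel_def by auto
  then show ?case using Suc by (meson Suc_lessD rtrancl.rtrancl_into_rtrancl)
qed

lemma path_reach_mem:
  assumes "path_edges p \<subseteq> L" "x \<in> set p"
  shows "(hd p, x) \<in> (adj_rel L)\<^sup>*"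
proof -
  obtain i where "i < length p" "p!i = x" using assms by (auto simp: in_set_conv_nth)
  moreover have "p \<noteq> []" using assms(2) by auto
  ultimately show ?thesis using path_reach[OF assms(1)] by (auto simp: hd_conv_nth)
qed

lemma cycle_reach:
  assumes "cycle_edges c \<subseteq> L" "x \<in> set c"
  shows "(last c, x) \<in> (adj_rel L)\<^sup>*"
proof -
  have ne: "c \<noteq> []" using assms by auto
  have "{last c, hd c} \<in> L" using assms unfolding cycle_edges_def by auto
  then have 1: "(last c, hd c) \<in> adj_rel L" unfolding adj_rel_def by simp
  obtain i where "i < length c" "c!i = x" using assms by (auto simp: in_set_conv_nth)
  then have "(c!0, x) \<in> (adj_rel L)\<^sup>*" using path_reach[of c L i] assms unfolding cycle_edges_def by auto
  then show ?thesis using 1 ne by (simp add: hd_conv_nth converse_rtrancl_into_rtrancl)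
qed

lemma backward_avoid:
  assumes step: "\<And>i. k \<le> i \<Longrightarrow> Suc i < length q \<Longrightarrow> q!Suc i \<in> Y \<Longrightarrow> q!i \<in> Y" and base: "q!k \<notin> Y"
  shows "k \<le> i \<Longrightarrow> i < length q \<Longrightarrow> q!i \<notin> Y"
proof (induction i)
  case 0 then show ?case using base by simp
next
  case (Suc i)
  show ?case
  proof (cases "k = Suc i")
    case True then show ?thesis using base by simp
  next
    case False
    then have "k \<le> i" using Suc by simp
    then show ?thesis using Suc step by auto
  qed
qed

lemma comp_closure:
  assumes LA: "L \<subseteq> A" and uX: "u \<in> X" and inc: "\<forall>x\<in>X. incident A x \<subseteq> L"
    and LX: "\<forall>e\<in>L. e \<subseteq> X" and reach: "\<forall>x\<in>X. (u,x) \<in> (adj_rel L)\<^sup>*"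
    and ne: "\<forall>e\<in>A. e \<noteq> {}"
  shows "comp_verts A u = X" "comp_edges A u = L"
proof -
  have 1: "comp_verts A u \<subseteq> X"
  proof
    fix x assume "x \<in> comp_verts A u"
    then have "(u,x) \<in> (adj_rel A)\<^sup>*" unfolding comp_verts_def by simp
    then show "x \<in> X"
    proof (induction rule: rtrancl_induct)
      case base then show ?case using uX .
    next
      case (step y z)
      then have "{y,z} \<in> A" unfolding adj_rel_def by simp
      then have "{y,z} \<in> L" using inc step.IH unfolding incident_def by auto
      then show ?case using LX by auto
    qed
  qed
  have 2: "X \<subseteq> comp_verts A u" using reach adj_rtrancl_mono[OF LA] unfolding comp_verts_def by blast
  show cv: "comp_verts A u = X" using 1 2 by simp
  show "comp_edges A u = L"
  proof (rule set_eqI, rule iffI)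
    fix e assume "e \<in> comp_edges A u"
    then have e: "e \<in> A" "e \<subseteq> X" unfolding comp_edges_def cv by auto
    then obtain x where "x \<in> e" using ne by blast
    then have "e \<in> incident A x" "x \<in> X" using e unfolding incident_def by auto
    then show "e \<in> L" using inc by auto
  next
    fix e assume "e \<in> L"
    then show "e \<in> comp_edges A u" unfolding comp_edges_def cv using LA LX by auto
  qed
qed

lemma comp_inc:
  assumes "x \<in> comp_verts A u" "doubleton_edges A"
  shows "incident (comp_edges A u) x = incident A x"
proof (rule set_eqI, rule iffI)
  fix e assume "e \<in> incident (comp_edges A u) x"
  then show "e \<in> incident A x" unfolding incident_def comp_edges_def by auto
next
  fix e assume e: "e \<in> incident A x"
  then have eA: "e \<in> A" and xe: "x \<in> e" unfolding incident_def by auto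
  obtain a b where ab: "a \<noteq> b" "e = {a,b}" using assms(2) eA unfolding doubleton_edges_def by blast
  obtain y where y: "e = {x,y}" using ab xe by blast
  have "(x,y) \<in> adj_rel A" using eA y unfolding adj_rel_def by simp
  moreover have "(u,x) \<in> (adj_rel A)\<^sup>*" using assms(1) unfolding comp_verts_def by simp
  ultimately have "(u,y) \<in> (adj_rel A)\<^sup>*" using rtrancl.rtrancl_into_rtrancl by metis
  then have "y \<in> comp_verts A u" unfolding comp_verts_def by simp
  then have "e \<subseteq> comp_verts A u" using y assms(1) by simp
  then show "e \<in> incident (comp_edges A u) x" using eA xe unfolding incident_def comp_edges_def by simp
qed

lemma comp_same:
  assumes "w \<in> comp_verts A u"
  shows "comp_verts A w = comp_verts A u"
proof -
  have uw: "(u,w) \<in> (adj_rel A)\<^sup>*" using assms unfolding comp_verts_def by simp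
  have wu: "(w,u) \<in> (adj_rel A)\<^sup>*" using adj_rtrancl_sym[OF uw] .
  show ?thesis unfolding comp_verts_def using uw wu by (meson rtrancl_trans)
qed

lemma comp_edges_same: "w \<in> comp_verts A u \<Longrightarrow> comp_edges A w = comp_edges A u"
  unfolding comp_edges_def using comp_same[of w A u] by simp
section \<open>Maximal walks\<close>

text \<open>All components of the states are found by following such walks.\<close>

definition max_walk :: "'a set set \<Rightarrow> 'a set \<Rightarrow> 'a \<Rightarrow> 'a list \<Rightarrow> bool" where
  "max_walk F T a p \<longleftrightarrow> distinct p \<and> 2 \<le> length p \<and> hd p = a \<and> path_edges p \<subseteq> F \<and>
     (last p \<in> T \<or> deg F (last p) \<noteq> 2) \<and>
     (\<forall>i. 0 < i \<and> i < length p - 1 \<longrightarrow> p!i \<notin> T \<and> deg F (p!i) = 2) \<and>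
     (\<forall>i < length p - 1. incident F (p!i) \<subseteq> path_edges p)"

lemma max_walk_facts:
  assumes "max_walk G T b q"
  shows "distinct q" "2 \<le> length q" "hd q = b" "path_edges q \<subseteq> G" "last q \<in> T \<or> deg G (last q) \<noteq> 2"
    "\<And>i. 0 < i \<Longrightarrow> i < length q - 1 \<Longrightarrow> q!i \<notin> T \<and> deg G (q!i) = 2"
    "\<And>i. i < length q - 1 \<Longrightarrow> incident G (q!i) \<subseteq> path_edges q"
  using assms unfolding max_walk_def by auto

lemma max_walk_Cons:
  assumes fin: "finite F" and inc_a: "incident F a = {{a,w}}" and aw: "a \<noteq> w" and awF: "{a,w} \<in> F"
    and inner: "w \<notin> T" "deg F w = 2"
    and walk: "max_walk (F - {{a,w}}) T w p'"
  shows "max_walk F T a (a # p')"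
proof -
  define F' where "F' = F - {{a,w}}"
  note p'1 = max_walk_facts[OF walk[folded F'_def]]
  have inc'a: "incident F' a = {}" unfolding F'_def incident_Diff using inc_a by auto
  have anot: "a \<notin> set p'"
  proof
    assume "a \<in> set p'"
    then obtain e where "e \<in> path_edges p'" "a \<in> e" using path_vertex_in_edge p'1 by metis
    then have "e \<in> incident F' a" using p'1(4) unfolding incident_def by auto
    then show False using inc'a by auto
  qed
  have ne: "p' \<noteq> []" using p'1 by auto
  define p where "p = a # p'"
  have pe: "path_edges p = insert {a,w} (path_edges p')" unfolding p_def using path_edges_Cons[OF ne] p'1 by simp
  have lastne: "last p' \<noteq> w" using last_neq_hd[OF p'1(1,2)] p'1(3) by simp
  have lastna: "last p' \<noteq> a" using anot ne by auto
  have degeq: "x \<notin> {a,w} \<Longrightarrow> deg F x = deg F' x" for x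
    unfolding F'_def using deg_remove[OF fin awF] by auto
  have incsub: "incident F x \<subseteq> insert {a,w} (incident F' x)" for x
    unfolding F'_def incident_Diff by auto
  have inner_p: "p ! i \<notin> T \<and> deg F (p ! i) = 2" if i: "0 < i" "i < length p - 1" for i
  proof (cases "i = 1")
    case True
    then have "p!i = w" using p_def p'1 ne by (simp add: hd_conv_nth)
    then show ?thesis using inner by auto
  next
    case False
    then obtain j where j: "i = Suc j" "0 < j" "j < length p' - 1" using i p_def by (cases i) auto
    have jl: "j < length p'" using j by auto
    have "p'!j \<noteq> a" using anot jl nth_mem by metis
    moreover have "p'!j \<noteq> w"
      using nth_eq_iff_index_eq[OF p'1(1) jl, of 0] j ne p'1(3) by (auto simp: hd_conv_nth)
    ultimately have "deg F (p'!j) = deg F' (p'!j)" using degeq[of "p'!j"] by simp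
    then show ?thesis using j p_def p'1(6)[OF j(2,3)] by simp
  qed
  have inc_p: "incident F (p ! i) \<subseteq> path_edges p" if i: "i < length p - 1" for i
  proof (cases i)
    case 0 then show ?thesis using inc_a pe p_def by simp
  next
    case (Suc j)
    then have "j < length p' - 1" "p!i = p'!j" using i p_def by auto
    then show ?thesis using p'1(7)[of j] incsub[of "p'!j"] pe by auto
  qed
  have "last p \<in> T \<or> deg F (last p) \<noteq> 2"
    using p'1(5) degeq[of "last p'"] lastne lastna ne p_def by auto
  moreover have "distinct p" "2 \<le> length p" "hd p = a" "path_edges p \<subseteq> F"
    using anot p'1 p_def pe awF unfolding F'_def by auto
  ultimately show ?thesis unfolding max_walk_def p_def[symmetric] using inner_p inc_p by simp
qed

lemma max_walk_exists:
  assumes "finite F" "doubleton_edges F" "deg F a = 1"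
  shows "\<exists>p. max_walk F T a p"
  using assms
proof (induction "card F" arbitrary: F a rule: less_induct)
  case less
  obtain w where w: "incident F a = {{a,w}}" "a \<noteq> w" "{a,w} \<in> F" using deg1_edge less.prems by metis
  show ?case
  proof (cases "w \<in> T \<or> deg F w \<noteq> 2")
    case True
    have "path_edges [a,w] = {{a,w}}" by (simp add: path_edges_Cons)
    then have "max_walk F T a [a,w]" unfolding max_walk_def using True w by auto
    then show ?thesis by blast
  next
    case False
    define F' where "F' = F - {{a,w}}"
    have fin': "finite F'" "doubleton_edges F'" using less.prems unfolding F'_def doubleton_edges_def by auto
    have "card F' < card F" unfolding F'_def using w less.prems by (metis card_Diff1_less)
    moreover have "deg F' w = 1" unfolding F'_def using deg_remove[OF less.prems(1) w(3)] False by auto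
    ultimately obtain p' where "max_walk F' T w p'" using less.hyps fin' by blast
    then show ?thesis using max_walk_Cons[OF less.prems(1) w] False unfolding F'_def by blast
  qed
qed

lemma path_closed_but_last:
  assumes d: "distinct p" "2 \<le> length p"
    and inc: "\<And>x. x \<in> set p \<Longrightarrow> x \<noteq> last p \<Longrightarrow> incident A x \<subseteq> path_edges p"
    and x: "x \<in> set p - {last p}" and xy: "{x,y} \<in> A"
  shows "y \<in> set p - {last p} \<or> (y = last p \<and> x = p!(length p - 2))"
proof -
  have xyp: "{x,y} \<in> path_edges p" using inc x xy unfolding incident_def by auto
  then have "y \<in> set p" using path_edges_subset by blast
  moreover have "x = p!(length p - 2)" if "y = last p"
    using last_edge[OF d xyp] that x by (auto simp: doubleton_eq_iff)
  ultimately show ?thesis by auto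
qed

lemma max_walk_closes_cycle:
  assumes walk: "max_walk G T b q" and GA: "G \<subseteq> A" and hb: "{h,b} \<in> A" "{h,b} \<notin> G"
    and lq: "last q = h"
  shows "is_cycle A q" "cycle_edges q = insert {h,b} (path_edges q)"
    "q!(length q - 2) \<noteq> b" "q!(length q - 2) \<noteq> h" "{q!(length q - 2), h} \<in> path_edges q"
    "\<And>x. x \<in> set q \<Longrightarrow> x \<noteq> h \<Longrightarrow> incident G x \<subseteq> path_edges q"
proof -
  note qf = max_walk_facts[OF walk]
  have ne: "q \<noteq> []" using qf(2) by auto
  show ce: "cycle_edges q = insert {h,b} (path_edges q)" unfolding cycle_edges_def using lq qf(3) by simp
  show le: "{q!(length q - 2), h} \<in> path_edges q" using last_edge_in[OF qf(2)] lq by simp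
  have l3: "3 \<le> length q"
  proof (rule ccontr)
    assume "\<not> 3 \<le> length q"
    then have "length q = 2" using qf(2) by simp
    then have "{b, h} \<in> G" using le qf(3,4) ne by (auto simp: hd_conv_nth)
    then show False using hb(2) by (simp add: insert_commute)
  qed
  show "is_cycle A q" unfolding is_cycle_def using l3 qf(1,4) ce GA hb(1) by auto
  show "q!(length q - 2) \<noteq> b"
    using nth_eq_iff_index_eq[OF qf(1), of "length q - 2" 0] l3 qf(3) ne by (auto simp: hd_conv_nth)
  show "q!(length q - 2) \<noteq> h"
    using nth_eq_iff_index_eq[OF qf(1), of "length q - 2" "length q - 1"] l3 lq ne by (auto simp: last_conv_nth)
  show "incident G x \<subseteq> path_edges q" if x: "x \<in> set q" "x \<noteq> h" for x
  proof -
    obtain i where "i < length q - 1" "q!i = x" using set_nth_lt_last[OF qf(1) x(1)] x(2) lq by metis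
    then show ?thesis using qf(7) by blast
  qed
qed

locale cubic_graph =
  fixes V :: "'a set" and E :: "'a set set"
  assumes simple: "simple_graph V E" and cub: "cubic V E"
begin

lemma finV: "finite V" using simple unfolding simple_graph_def by auto

lemma edgeE: "e \<in> E \<Longrightarrow> \<exists>x y. x \<in> V \<and> y \<in> V \<and> x \<noteq> y \<and> e = {x,y}"
  using simple unfolding simple_graph_def by auto

lemma E_Pow: "E \<subseteq> Pow V" using edgeE by blast

lemma finE: "finite E" using finite_subset[OF E_Pow] finV by simp

lemma doubleton_edges_E: "doubleton_edges E" unfolding doubleton_edges_def using edgeE by blast

lemma doubleton_edges_sub: "A \<subseteq> E \<Longrightarrow> doubleton_edges A" using doubleton_edges_subset[OF doubleton_edges_E] .

lemma edge_in_V: "{x,y} \<in> E \<Longrightarrow> x \<in> V \<and> y \<in> V"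
  using E_Pow by auto

lemma edge_neq: "{x,y} \<in> E \<Longrightarrow> x \<noteq> y"
proof -
  assume h: "{x,y} \<in> E"
  obtain a b where ab: "a \<noteq> b" "{x,y} = {a,b}" using edgeE[OF h] by blast
  then show ?thesis by (auto simp: doubleton_eq_iff)
qed

lemma edge_at: "e \<in> E \<Longrightarrow> x \<in> e \<Longrightarrow> \<exists>y. e = {x,y}"
  using edgeE by blast

lemma edge_two: "A \<subseteq> E \<Longrightarrow> e \<in> A \<Longrightarrow> u \<in> e \<Longrightarrow> z \<in> e \<Longrightarrow> u \<noteq> z \<Longrightarrow> e = {u,z}"
proof -
  assume h: "A \<subseteq> E" "e \<in> A" "u \<in> e" "z \<in> e" "u \<noteq> z"
  obtain a b where "e = {a,b}" using edgeE h(1,2) by blast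
  then show ?thesis using h(3-5) by auto
qed

lemma edges_nonempty: "A \<subseteq> E \<Longrightarrow> \<forall>e\<in>A. e \<noteq> {}"
  using edgeE by blast

lemma deg_E: "x \<in> V \<Longrightarrow> deg E x = 3" using cub unfolding cubic_def by auto

lemma deg_le3: "A \<subseteq> E \<Longrightarrow> x \<in> V \<Longrightarrow> deg A x \<le> 3"
proof -
  assume "A \<subseteq> E" "x \<in> V"
  then show ?thesis using deg_mono[OF finE, of A x] deg_E[of x] by simp
qed

lemma finA: "A \<subseteq> E \<Longrightarrow> finite A" by (rule finite_subset[OF _ finE])

lemma deg3_has_edge: "A \<subseteq> E \<Longrightarrow> x \<in> V \<Longrightarrow> deg A x = 3 \<Longrightarrow> {x,y} \<in> E \<Longrightarrow> {x,y} \<in> A"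
proof -
  assume h: "A \<subseteq> E" "x \<in> V" "deg A x = 3" "{x,y} \<in> E"
  have s: "incident A x \<subseteq> incident E x" by (rule incident_mono[OF h(1)])
  have c: "card (incident A x) = card (incident E x)" using h(3) deg_E[OF h(2)] unfolding deg_def by simp
  have "incident A x = incident E x" using card_subset_eq[OF finite_incident[OF finE] s c] .
  moreover have "{x,y} \<in> incident E x" using h(4) unfolding incident_def by simp
  ultimately have "{x,y} \<in> incident A x" by simp
  then show ?thesis unfolding incident_def by simp
qed

lemma deg_insert_edge: "A \<subseteq> E \<Longrightarrow> e \<notin> A \<Longrightarrow> deg (insert e A) x = (if x \<in> e then Suc (deg A x) else deg A x)"
  by (rule deg_insert[OF finA])

lemma deg_remove_edge: "A \<subseteq> E \<Longrightarrow> e \<in> A \<Longrightarrow> deg (A - {e}) x = (if x \<in> e then deg A x - 1 else deg A x)"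
  by (rule deg_remove[OF finA])

lemma non_edges_card: "A \<subseteq> E \<Longrightarrow> x \<in> V \<Longrightarrow> card (incident E x - incident A x) = 3 - deg A x"
proof -
  assume h: "A \<subseteq> E" "x \<in> V"
  have s: "incident A x \<subseteq> incident E x" by (rule incident_mono[OF h(1)])
  have "card (incident E x - incident A x) = card (incident E x) - card (incident A x)"
    using card_Diff_subset[OF finite_subset[OF s finite_incident[OF finE]] s] .
  then show ?thesis using deg_E[OF h(2)] unfolding deg_def by simp
qed

lemma other_edge:
  assumes "A \<subseteq> E" "x \<in> V" "deg A x = 2"
  obtains y where "{x,y} \<in> E" "{x,y} \<notin> A" "\<And>z. {x,z} \<in> E \<Longrightarrow> {x,z} \<notin> A \<Longrightarrow> z = y"
proof -
  have "card (incident E x - incident A x) = 1" using non_edges_card[OF assms(1,2)] assms(3) by simp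
  then obtain e where e: "incident E x - incident A x = {e}" by (auto simp: card_1_singleton_iff)
  then have "e \<in> E" "x \<in> e" "e \<notin> A" unfolding incident_def by auto
  then obtain y where y: "e = {x,y}" using edge_at by blast
  have "z = y" if "{x,z} \<in> E" "{x,z} \<notin> A" for z
  proof -
    have "{x,z} \<in> incident E x - incident A x" using that unfolding incident_def by auto
    then have "{x,z} = {x,y}" using e y by auto
    then show ?thesis by (auto simp: doubleton_eq_iff)
  qed
  then show ?thesis using that y \<open>e \<in> E\<close> \<open>e \<notin> A\<close> by blast
qed

lemma deg1_non_edge:
  assumes "A \<subseteq> E" "x \<in> V" "deg A x = 1"
  obtains y where "{x,y} \<in> E" "{x,y} \<notin> A"
proof -
  have "card (incident E x - incident A x) = 2" using non_edges_card[OF assms(1,2)] assms(3) by simp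
  then have "incident E x - incident A x \<noteq> {}" by (metis card.empty zero_neq_numeral)
  then obtain e where e: "e \<in> incident E x - incident A x" by blast
  then have "e \<in> E" "x \<in> e" "e \<notin> A" unfolding incident_def by auto
  then obtain y where y: "e = {x,y}" using edge_at by blast
  then show ?thesis using that \<open>e \<in> E\<close> \<open>e \<notin> A\<close> by blast
qed

abbreviation \<R> :: "'a state set" where "\<R> \<equiv> states V E"

lemma state_profile:
  assumes "(A,u,v) \<in> \<R>"
  shows "A \<subseteq> E" "u \<in> V" "v \<in> V" "\<And>x. x \<in> V \<Longrightarrow> x \<noteq> u \<Longrightarrow> x \<noteq> v \<Longrightarrow> deg A x = 2"
    "u = v \<Longrightarrow> deg A u = 2"
    "u \<noteq> v \<Longrightarrow> (deg A u = 1 \<and> deg A v = 3) \<or> (deg A u = 3 \<and> deg A v = 1) \<or> (deg A u = 3 \<and> deg A v = 3)"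
proof -
  have h: "A \<subseteq> E" "u \<in> V" "v \<in> V" "(if u \<noteq> v then odd_set V A = {u, v} else odd_set V A = {})"
    "\<forall>w\<in>V. deg A w \<ge> 1" "deg A u + deg A v \<ge> 4"
    using assms unfolding states_def by auto
  show "A \<subseteq> E" "u \<in> V" "v \<in> V" using h by auto
  have le3: "\<And>x. x \<in> V \<Longrightarrow> deg A x \<le> 3" using deg_le3 h by auto
  show "deg A x = 2" if "x \<in> V" "x \<noteq> u" "x \<noteq> v" for x
  proof -
    have "x \<notin> odd_set V A" using h(4) that by (auto split: if_splits)
    then have "even (deg A x)" using that unfolding odd_set_def by auto
    moreover have "1 \<le> deg A x" "deg A x \<le> 3" using h le3 that by auto
    ultimately show ?thesis by presburger
  qed
  show "deg A u = 2" if "u = v"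
  proof -
    have "u \<notin> odd_set V A" using h(4) that by (auto split: if_splits)
    then have "even (deg A u)" using h unfolding odd_set_def by auto
    moreover have "2 \<le> deg A u" "deg A u \<le> 3" using h le3 that by auto
    ultimately show ?thesis by presburger
  qed
  show "(deg A u = 1 \<and> deg A v = 3) \<or> (deg A u = 3 \<and> deg A v = 1) \<or> (deg A u = 3 \<and> deg A v = 3)" if "u \<noteq> v"
  proof -
    have "u \<in> odd_set V A" "v \<in> odd_set V A" using h(4) that by auto
    then have "odd (deg A u)" "odd (deg A v)" unfolding odd_set_def by auto
    moreover have "deg A u \<le> 3" "deg A v \<le> 3" using h le3 by auto
    ultimately show ?thesis using h(6) by presburger
  qed
qed

lemma mk_state:
  assumes "A \<subseteq> E" "u \<in> V" "v \<in> V" "\<And>x. x \<in> V \<Longrightarrow> x \<noteq> u \<Longrightarrow> x \<noteq> v \<Longrightarrow> deg A x = 2"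
    "u = v \<Longrightarrow> deg A u = 2"
    "u \<noteq> v \<Longrightarrow> (deg A u = 1 \<and> deg A v = 3) \<or> (deg A u = 3 \<and> deg A v = 1) \<or> (deg A u = 3 \<and> deg A v = 3)"
  shows "(A,u,v) \<in> \<R>"
proof -
  have os: "(if u \<noteq> v then odd_set V A = {u, v} else odd_set V A = {})"
  proof (cases "u = v")
    case True
    have "odd_set V A = {}"
    proof (rule equals0I)
      fix x assume x: "x \<in> odd_set V A"
      then have "x \<in> V" "odd (deg A x)" unfolding odd_set_def by auto
      moreover have "deg A x = 2"
      proof (cases "x = u")
        case True then show ?thesis using assms(5) \<open>u = v\<close> by simp
      next
        case False then show ?thesis using assms(4)[of x] \<open>u = v\<close> \<open>x \<in> V\<close> by simp
      qed
      ultimately show False by simp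
    qed
    then show ?thesis using True by simp
  next
    case False
    then have ou: "odd (deg A u)" "odd (deg A v)" using assms(6) by auto
    have "odd_set V A = {u,v}"
    proof (rule set_eqI, rule iffI)
      fix x assume x: "x \<in> odd_set V A"
      then have "x \<in> V" "odd (deg A x)" unfolding odd_set_def by auto
      then show "x \<in> {u,v}" using assms(4)[of x] by (cases "x = u \<or> x = v") auto
    next
      fix x assume "x \<in> {u,v}"
      then show "x \<in> odd_set V A" using ou assms(2,3) unfolding odd_set_def by auto
    qed
    then show ?thesis using False by simp
  qed
  have "\<forall>w\<in>V. deg A w \<ge> 1"
  proof
    fix w assume w: "w \<in> V"
    show "deg A w \<ge> 1"
    proof (cases "w = u \<or> w = v")
      case True
      then show ?thesis using assms(5,6) by (cases "u = v") auto
    next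
      case False
      then show ?thesis using assms(4)[of w] w by simp
    qed
  qed
  moreover have "deg A u + deg A v \<ge> 4" using assms(5,6) by (cases "u = v") auto
  ultimately show ?thesis unfolding states_def using assms(1,2,3) os by simp
qed

definition saturated :: "'a set set \<Rightarrow> 'a \<Rightarrow> 'a \<Rightarrow> bool" where
  "saturated A u v \<longleftrightarrow> deg A u = 3 \<and> deg A v = 3"

lemma state_swap: "(A,u,v) \<in> \<R> \<Longrightarrow> (A,v,u) \<in> \<R>"
proof -
  assume s: "(A,u,v) \<in> \<R>"
  note p = state_profile[OF s]
  show ?thesis
    apply (rule mk_state)
    using p by auto
qed

lemma saturated_swap: "saturated A u v = saturated A v u" unfolding saturated_def by auto

section \<open>Moves\<close>

inductive_set moves :: "('a state \<times> 'a state) set" where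
  add_u: "(A,u,v) \<in> \<R> \<Longrightarrow> \<not> saturated A u v \<Longrightarrow> {u,w} \<in> E \<Longrightarrow> {u,w} \<notin> A \<Longrightarrow> ((A,u,v), (insert {u,w} A, w, v)) \<in> moves"
| del_u: "(A,u,v) \<in> \<R> \<Longrightarrow> saturated A u v \<Longrightarrow> {u,w} \<in> A \<Longrightarrow> ((A,u,v), (A - {{u,w}}, w, v)) \<in> moves"
| add_v: "(A,u,v) \<in> \<R> \<Longrightarrow> \<not> saturated A u v \<Longrightarrow> {v,w} \<in> E \<Longrightarrow> {v,w} \<notin> A \<Longrightarrow> ((A,u,v), (insert {v,w} A, u, w)) \<in> moves"
| del_v: "(A,u,v) \<in> \<R> \<Longrightarrow> saturated A u v \<Longrightarrow> {v,w} \<in> A \<Longrightarrow> ((A,u,v), (A - {{v,w}}, u, w)) \<in> moves"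

lemma add_move_u:
  assumes s: "(A,u,v) \<in> \<R>" and nf: "\<not> saturated A u v" and e: "{u,w} \<in> E" "{u,w} \<notin> A"
  shows "(insert {u,w} A, w, v) \<in> \<R>" "saturated (insert {u,w} A) w v"
proof -
  note p = state_profile[OF s]
  have uw: "u \<noteq> w" using edge_neq e(1) .
  have wV: "w \<in> V" using edge_in_V e(1) by simp
  have du: "deg A u \<noteq> 3"
  proof
    assume "deg A u = 3"
    then have "{u,w} \<in> A" using deg3_has_edge[OF p(1) p(2) _ e(1)] by simp
    then show False using e(2) by simp
  qed
  have wv: "w \<noteq> v \<and> deg A w = 2 \<and> deg A v = (if u = v then 2 else 3)"
  proof (cases "u = v")
    case True
    then show ?thesis using p(4)[OF wV] p(5) uw by auto
  next
    case False
    then have d: "deg A u = 1" "deg A v = 3" using p(6) du by auto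
    have "w \<noteq> v"
    proof
      assume "w = v"
      then have "{v,u} \<in> E" using e(1) by (simp add: insert_commute)
      then have "{v,u} \<in> A" using deg3_has_edge[OF p(1) p(3) d(2)] by simp
      then show False using e(2) \<open>w = v\<close> by (simp add: insert_commute)
    qed
    then show ?thesis using p(4)[OF wV] False d uw by auto
  qed
  let ?A = "insert {u,w} A"
  have sub: "?A \<subseteq> E" using p(1) e(1) by simp
  have dg: "deg ?A x = (if x \<in> {u,w} then Suc (deg A x) else deg A x)" for x
    using deg_insert_edge[OF p(1) e(2)] by simp
  have dw: "deg ?A w = 3" using dg[of w] wv by simp
  have dv: "deg ?A v = 3"
  proof (cases "u = v")
    case True then show ?thesis using dg[of v] wv by simp
  next
    case False then show ?thesis using dg[of v] wv by simp
  qed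
  show "saturated ?A w v" unfolding saturated_def using dw dv by simp
  show "(?A, w, v) \<in> \<R>"
  proof (rule mk_state)
    show "?A \<subseteq> E" by (rule sub)
    show "w \<in> V" "v \<in> V" using wV p(3) by auto
    show "deg ?A x = 2" if "x \<in> V" "x \<noteq> w" "x \<noteq> v" for x
    proof (cases "x = u")
      case True
      then have "u \<noteq> v" using that by simp
      then have "deg A u = 1" using p(6) du by auto
      then show ?thesis using dg[of x] True by simp
    next
      case False
      then show ?thesis using dg[of x] p(4)[of x] that by simp
    qed
    show "deg ?A w = 2" if "w = v" using that wv by simp
    show "(deg ?A w = 1 \<and> deg ?A v = 3) \<or> (deg ?A w = 3 \<and> deg ?A v = 1) \<or> (deg ?A w = 3 \<and> deg ?A v = 3)"
      using dw dv by simp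
  qed
qed

lemma del_move_u:
  assumes s: "(A,u,v) \<in> \<R>" and f: "saturated A u v" and e: "{u,w} \<in> A"
  shows "(A - {{u,w}}, w, v) \<in> \<R>" "\<not> saturated (A - {{u,w}}) w v"
proof -
  note p = state_profile[OF s]
  have eE: "{u,w} \<in> E" using e p(1) by auto
  have uw: "u \<noteq> w" using edge_neq eE .
  have wV: "w \<in> V" using edge_in_V eE by simp
  have d: "deg A u = 3" "deg A v = 3" using f unfolding saturated_def by auto
  have uv: "u \<noteq> v" using d p(5) by auto
  let ?A = "A - {{u,w}}"
  have sub: "?A \<subseteq> E" using p(1) by auto
  have dg: "deg ?A x = (if x \<in> {u,w} then deg A x - 1 else deg A x)" for x
    using deg_remove_edge[OF p(1) e] by simp
  have dw: "deg ?A w \<le> 2" using dg[of w] deg_le3[OF p(1) wV] by simp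
  show "\<not> saturated ?A w v" unfolding saturated_def using dw by simp
  show "(?A, w, v) \<in> \<R>"
  proof (rule mk_state)
    show "?A \<subseteq> E" by (rule sub)
    show "w \<in> V" "v \<in> V" using wV p(3) by auto
    show "deg ?A x = 2" if "x \<in> V" "x \<noteq> w" "x \<noteq> v" for x
    proof (cases "x = u")
      case True
      then show ?thesis using dg[of x] d by simp
    next
      case False
      then show ?thesis using dg[of x] p(4)[of x] that by simp
    qed
    show "deg ?A w = 2" if "w = v" using that dg[of w] d by simp
    show "(deg ?A w = 1 \<and> deg ?A v = 3) \<or> (deg ?A w = 3 \<and> deg ?A v = 1) \<or> (deg ?A w = 3 \<and> deg ?A v = 3)"
      if "w \<noteq> v"
    proof -
      have "deg ?A w = 1" using dg[of w] p(4)[OF wV] that uw by simp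
      moreover have "deg ?A v = 3" using dg[of v] that uv d by simp
      ultimately show ?thesis by simp
    qed
  qed
qed

lemma add_move_v:
  assumes s: "(A,u,v) \<in> \<R>" and nf: "\<not> saturated A u v" and e: "{v,w} \<in> E" "{v,w} \<notin> A"
  shows "(insert {v,w} A, u, w) \<in> \<R>" "saturated (insert {v,w} A) u w"
proof -
  have "(insert {v,w} A, w, u) \<in> \<R>" "saturated (insert {v,w} A) w u"
    using add_move_u[OF state_swap[OF s] _ e] nf saturated_swap by auto
  then show "(insert {v,w} A, u, w) \<in> \<R>" "saturated (insert {v,w} A) u w" using state_swap saturated_swap by auto
qed

lemma del_move_v:
  assumes s: "(A,u,v) \<in> \<R>" and f: "saturated A u v" and e: "{v,w} \<in> A"
  shows "(A - {{v,w}}, u, w) \<in> \<R>" "\<not> saturated (A - {{v,w}}) u w"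
proof -
  have "(A - {{v,w}}, w, u) \<in> \<R>" "\<not> saturated (A - {{v,w}}) w u"
    using del_move_u[OF state_swap[OF s] _ e] f saturated_swap by auto
  then show "(A - {{v,w}}, u, w) \<in> \<R>" "\<not> saturated (A - {{v,w}}) u w" using state_swap saturated_swap by auto
qed

lemma moves_states_pairs: "((A0,u0,v0),(A1,u1,v1)) \<in> moves \<Longrightarrow> (A0,u0,v0) \<in> \<R> \<and> (A1,u1,v1) \<in> \<R>"
proof (induction rule: moves.induct)
  case (add_u A u v w) then show ?case using add_move_u(1)[OF add_u] by simp
next
  case (del_u A u v w) then show ?case using del_move_u(1)[OF del_u] by simp
next
  case (add_v A u v w) then show ?case using add_move_v(1)[OF add_v] by simp
next
  case (del_v A u v w) then show ?case using del_move_v(1)[OF del_v] by simp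
qed

lemma moves_states: "(s,t) \<in> moves \<Longrightarrow> s \<in> \<R> \<and> t \<in> \<R>"
  using moves_states_pairs by (cases s; cases t) auto

lemma moves_sym_pairs: "((A0,u0,v0),(A1,u1,v1)) \<in> moves \<Longrightarrow> ((A1,u1,v1),(A0,u0,v0)) \<in> moves"
proof (induction rule: moves.induct)
  case (add_u A u v w)
  note r = add_move_u[OF add_u]
  have "{w,u} \<in> insert {u,w} A" by (simp add: insert_commute)
  then have "((insert {u,w} A, w, v), (insert {u,w} A - {{w,u}}, u, v)) \<in> moves"
    using moves.del_u[OF r(1) r(2)] by blast
  moreover have "insert {u,w} A - {{w,u}} = A" using add_u(4) by (auto simp: insert_commute)
  ultimately show ?case by simp
next
  case (del_u A u v w)
  note r = del_move_u[OF del_u]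
  have p1: "A \<subseteq> E" using state_profile(1)[OF del_u(1)] .
  have "{w,u} \<in> E" using del_u(3) p1 by (auto simp: insert_commute)
  moreover have "{w,u} \<notin> A - {{u,w}}" by (simp add: insert_commute)
  ultimately have "((A - {{u,w}}, w, v), (insert {w,u} (A - {{u,w}}), u, v)) \<in> moves"
    using moves.add_u[OF r(1) r(2)] by blast
  moreover have "insert {w,u} (A - {{u,w}}) = A" using del_u(3) by (auto simp: insert_commute)
  ultimately show ?case by simp
next
  case (add_v A u v w)
  note r = add_move_v[OF add_v]
  have "{w,v} \<in> insert {v,w} A" by (simp add: insert_commute)
  then have "((insert {v,w} A, u, w), (insert {v,w} A - {{w,v}}, u, v)) \<in> moves"
    using moves.del_v[OF r(1) r(2)] by blast
  moreover have "insert {v,w} A - {{w,v}} = A" using add_v(4) by (auto simp: insert_commute)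
  ultimately show ?case by simp
next
  case (del_v A u v w)
  note r = del_move_v[OF del_v]
  have p1: "A \<subseteq> E" using state_profile(1)[OF del_v(1)] .
  have "{w,v} \<in> E" using del_v(3) p1 by (auto simp: insert_commute)
  moreover have "{w,v} \<notin> A - {{v,w}}" by (simp add: insert_commute)
  ultimately have "((A - {{v,w}}, u, w), (insert {w,v} (A - {{v,w}}), u, v)) \<in> moves"
    using moves.add_v[OF r(1) r(2)] by blast
  moreover have "insert {w,v} (A - {{v,w}}) = A" using del_v(3) by (auto simp: insert_commute)
  ultimately show ?case by simp
qed

lemma moves_sym: "(s,t) \<in> moves \<Longrightarrow> (t,s) \<in> moves"
  using moves_sym_pairs by (cases s; cases t) auto

lemma moves_rtrancl_sym: "(s,t) \<in> moves\<^sup>* \<Longrightarrow> (t,s) \<in> moves\<^sup>*"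
proof (induction rule: rtrancl_induct)
  case base then show ?case by simp
next
  case (step y z) then show ?case using moves_sym by (meson converse_rtrancl_into_rtrancl)
qed

section \<open>Reaching a state with a fixed 2-factor\<close>

definition two_factor :: "'a set set \<Rightarrow> bool" where
  "two_factor F \<longleftrightarrow> F \<subseteq> E \<and> (\<forall>x\<in>V. deg F x = 2)"

lemma two_factor_state: "two_factor F \<Longrightarrow> x \<in> V \<Longrightarrow> (F,x,x) \<in> \<R> \<and> \<not> saturated F x x"
proof -
  assume h: "two_factor F" "x \<in> V"
  have "(F,x,x) \<in> \<R>" apply (rule mk_state) using h unfolding two_factor_def by auto
  moreover have "\<not> saturated F x x" using h unfolding two_factor_def saturated_def by auto
  ultimately show ?thesis by simp
qed

lemma diag_state_two_factor: "(F,x,x) \<in> \<R> \<Longrightarrow> two_factor F"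
proof -
  assume s: "(F,x,x) \<in> \<R>"
  note p = state_profile[OF s]
  show ?thesis unfolding two_factor_def
  proof (intro conjI ballI)
    show "F \<subseteq> E" by (rule p(1))
    fix y assume "y \<in> V" then show "deg F y = 2" using p(4)[of y] p(5) by (cases "y = x") auto
  qed
qed

text \<open>With a 2-factor F fixed, the diagonal defect can cross an edge {x,y} not in F: add it and
  delete it again from the other end.\<close>

lemma factor_step_off:
  assumes F: "two_factor F" and e: "{x,y} \<in> E" "{x,y} \<notin> F"
  shows "((F,x,x),(F,y,y)) \<in> moves\<^sup>*"
proof -
  have xV: "x \<in> V" using edge_in_V e(1) by simp
  note s0 = two_factor_state[OF F xV]
  have m1: "((F,x,x),(insert {x,y} F, y, x)) \<in> moves" using moves.add_u[OF _ _ e] s0 by blast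
  note r1 = add_move_u[OF _ _ e, of x] s0
  have "{x,y} \<in> insert {x,y} F" by simp
  then have m2: "((insert {x,y} F, y, x), (insert {x,y} F - {{x,y}}, y, y)) \<in> moves"
    using moves.del_v[of "insert {x,y} F" y x y] r1 s0 by blast
  have "insert {x,y} F - {{x,y}} = F" using e(2) by auto
  then show ?thesis using m1 m2 by simp
qed

text \<open>With w' and z' the partners of w and z along their
  edges outside F, six moves lead from (F,w,w) back to (F,z,z): add {w,w'}, delete {w,z},
  add {z,z'}, delete {w',w}, add {w,z}, delete {z',z}.\<close>

lemma factor_step_along:
  assumes F: "two_factor F" and wz: "{w,z} \<in> F"
  shows "((F,w,w),(F,z,z)) \<in> moves\<^sup>*"
proof -
  have FE: "F \<subseteq> E" using F unfolding two_factor_def by simp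
  have wzE: "{w,z} \<in> E" using wz FE by auto
  have wV: "w \<in> V" and zV: "z \<in> V" using edge_in_V wzE by auto
  have wnz: "w \<noteq> z" using edge_neq wzE .
  have dF: "\<And>x. x \<in> V \<Longrightarrow> deg F x = 2" using F unfolding two_factor_def by simp
  obtain w' where w': "{w,w'} \<in> E" "{w,w'} \<notin> F" "\<And>t. {w,t} \<in> E \<Longrightarrow> {w,t} \<notin> F \<Longrightarrow> t = w'"
    using other_edge[OF FE wV dF[OF wV]] by metis
  obtain z' where z': "{z,z'} \<in> E" "{z,z'} \<notin> F" "\<And>t. {z,t} \<in> E \<Longrightarrow> {z,t} \<notin> F \<Longrightarrow> t = z'"
    using other_edge[OF FE zV dF[OF zV]] by metis
  have w'V: "w' \<in> V" and z'V: "z' \<in> V" using edge_in_V w'(1) z'(1) by auto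
  have ww': "w \<noteq> w'" using edge_neq w'(1) .
  have zz': "z \<noteq> z'" using edge_neq z'(1) .
  have w'z: "w' \<noteq> z" using w'(2) wz by auto
  have z'w: "z' \<noteq> w" using z'(2) wz by (auto simp: insert_commute)
  have w'z': "w' \<noteq> z'"
  proof
    assume eq: "w' = z'"
    obtain t where t: "{w',t} \<in> E" "{w',t} \<notin> F" "\<And>r. {w',r} \<in> E \<Longrightarrow> {w',r} \<notin> F \<Longrightarrow> r = t"
      using other_edge[OF FE w'V dF[OF w'V]] by metis
    have "w = t" using t(3)[of w] w'(1,2) by (simp add: insert_commute)
    moreover have "z = t" using t(3)[of z] z'(1,2) eq by (simp add: insert_commute)
    ultimately show False using wnz by simp
  qed
  define A1 where "A1 = insert {w,w'} F"
  define A2 where "A2 = A1 - {{w,z}}"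
  define A3 where "A3 = insert {z,z'} A2"
  define A4 where "A4 = A3 - {{w',w}}"
  define A5 where "A5 = insert {w,z} A4"
  define A6 where "A6 = A5 - {{z',z}}"
  note s0 = two_factor_state[OF F wV]
  have m1: "((F,w,w),(A1,w',w)) \<in> moves" unfolding A1_def using moves.add_u[OF _ _ w'(1,2)] s0 by blast
  note r1 = add_move_u[OF _ _ w'(1,2), of w] s0
  have s1: "(A1,w',w) \<in> \<R>" "saturated A1 w' w" using r1 unfolding A1_def by auto
  have e2: "{w,z} \<in> A1" unfolding A1_def using wz by simp
  have m2: "((A1,w',w),(A2,w',z)) \<in> moves" unfolding A2_def using moves.del_v[OF s1 e2] .
  have s2: "(A2,w',z) \<in> \<R>" "\<not> saturated A2 w' z" using del_move_v[OF s1 e2] unfolding A2_def by auto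
  have e3: "{z,z'} \<notin> A2" unfolding A2_def A1_def using z'(2) zz' w'z z'w wnz by (auto simp: doubleton_eq_iff)
  have m3: "((A2,w',z),(A3,w',z')) \<in> moves" unfolding A3_def using moves.add_v[OF s2 z'(1) e3] .
  have s3: "(A3,w',z') \<in> \<R>" "saturated A3 w' z'" using add_move_v[OF s2 z'(1) e3] unfolding A3_def by auto
  have e4: "{w',w} \<in> A3" unfolding A3_def A2_def A1_def using w'z by (auto simp: doubleton_eq_iff)
  have m4: "((A3,w',z'),(A4,w,z')) \<in> moves" unfolding A4_def using moves.del_u[OF s3 e4] .
  have s4: "(A4,w,z') \<in> \<R>" "\<not> saturated A4 w z'" using del_move_u[OF s3 e4] unfolding A4_def by auto
  have e5: "{w,z} \<notin> A4" unfolding A4_def A3_def A2_def using z'w by (auto simp: doubleton_eq_iff)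
  have m5: "((A4,w,z'),(A5,z,z')) \<in> moves" unfolding A5_def using moves.add_u[OF s4 wzE e5] .
  have s5: "(A5,z,z') \<in> \<R>" "saturated A5 z z'" using add_move_u[OF s4 wzE e5] unfolding A5_def by auto
  have e6: "{z',z} \<in> A5" unfolding A5_def A4_def A3_def using ww' w'z w'z' z'w wnz zz' by (auto simp: doubleton_eq_iff)
  have m6: "((A5,z,z'),(A6,z,z)) \<in> moves" unfolding A6_def using moves.del_v[OF s5 e6] .
  have "A6 = F"
  proof (rule set_eqI)
    fix e
    show "e \<in> A6 \<longleftrightarrow> e \<in> F"
      unfolding A6_def A5_def A4_def A3_def A2_def A1_def
      using wz w'(2) z'(2) ww' w'z w'z' z'w wnz zz' by (auto simp: doubleton_eq_iff insert_commute)
  qed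
  then show ?thesis using m1 m2 m3 m4 m5 m6 by (meson converse_rtrancl_into_rtrancl r_into_rtrancl)
qed

lemma factor_defect_anywhere:
  assumes F: "two_factor F" and conn: "connected_graph V E" and xV: "x \<in> V" and yV: "y \<in> V"
  shows "((F,x,x),(F,y,y)) \<in> moves\<^sup>*"
proof -
  have "(x,y) \<in> (adj_rel E)\<^sup>*" using conn xV yV unfolding connected_graph_def by auto
  then show ?thesis
  proof (induction rule: rtrancl_induct)
    case base then show ?case by simp
  next
    case (step y z)
    then have e: "{y,z} \<in> E" unfolding adj_rel_def by simp
    show ?case
    proof (cases "{y,z} \<in> F")
      case True then show ?thesis using step.IH factor_step_along[OF F True] by (meson rtrancl_trans)
    next
      case False then show ?thesis using step.IH factor_step_off[OF F e False] by (meson rtrancl_trans)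
    qed
  qed
qed

lemma sym_diff_remove: "e \<in> A \<Longrightarrow> e \<notin> Fs \<Longrightarrow> sym_diff (A - {e}) Fs = sym_diff A Fs - {e} \<and> e \<in> sym_diff A Fs"
  unfolding sym_diff_def by auto

lemma sym_diff_insert: "e \<notin> A \<Longrightarrow> e \<in> Fs \<Longrightarrow> sym_diff (insert e A) Fs = sym_diff A Fs - {e} \<and> e \<in> sym_diff A Fs"
  unfolding sym_diff_def by auto

lemma sym_diff_finite: "A \<subseteq> E \<Longrightarrow> Fs \<subseteq> E \<Longrightarrow> finite (sym_diff A Fs)"
  unfolding sym_diff_def using finA by auto

text \<open>Two different 2-factors are incomparable, so a diagonal state (A,u,u) with A \<noteq> Fs misses
  some edge of Fs.\<close>

lemma two_factor_diff:
  assumes "two_factor F" "two_factor G" "F \<noteq> G"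
  shows "\<exists>e\<in>G. e \<notin> F"
proof (rule ccontr)
  assume "\<not> ?thesis"
  then have GF: "G \<subseteq> F" by auto
  have "F \<subseteq> G"
  proof
    fix e assume e: "e \<in> F"
    have eE: "e \<in> E" using e assms(1) unfolding two_factor_def by auto
    then obtain x y where xy: "x \<in> V" "e = {x,y}" using edgeE by blast
    have s: "incident G x \<subseteq> incident F x" by (rule incident_mono[OF GF])
    have c: "card (incident G x) = card (incident F x)" using assms(1,2) xy unfolding two_factor_def deg_def by simp
    have FE: "F \<subseteq> E" using assms(1) unfolding two_factor_def by simp
    have "incident G x = incident F x" using card_subset_eq[OF finite_incident[OF finA[OF FE]] s c] .
    moreover have "e \<in> incident F x" using e xy unfolding incident_def by simp
    ultimately show "e \<in> G" unfolding incident_def by blast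
  qed
  then show False using GF assms(3) by simp
qed

text \<open>Descent towards a fixed 2-factor Fs, measured by the size of the symmetric difference.
  From a diagonal state (A,u,u) with A \<noteq> Fs, move the defect to an endpoint c of an edge
  {c,c'} \<in> Fs - A and add that edge.\<close>

lemma diag_descent:
  assumes Fs: "two_factor Fs" and conn: "connected_graph V E"
    and s: "(A,u,u) \<in> \<R>" and ne: "A \<noteq> Fs"
  shows "\<exists>A' u' v'. (A',u',v') \<in> \<R> \<and> saturated A' u' v' \<and> ((A,u,u),(A',u',v')) \<in> moves\<^sup>* \<and>
    card (sym_diff A' Fs) < card (sym_diff A Fs)"
proof -
  note p = state_profile[OF s]
  have FsE: "Fs \<subseteq> E" using Fs unfolding two_factor_def by simp
  have A2: "two_factor A" using diag_state_two_factor[OF s] .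
  obtain e where e: "e \<in> Fs" "e \<notin> A" using two_factor_diff[OF A2 Fs ne] by blast
  then obtain c c' where cc: "c \<in> V" "e = {c,c'}" using edgeE FsE by blast
  have walk: "((A,u,u),(A,c,c)) \<in> moves\<^sup>*" using factor_defect_anywhere[OF A2 conn p(2) cc(1)] .
  note sc = two_factor_state[OF A2 cc(1)]
  have eE': "{c,c'} \<in> E" "{c,c'} \<notin> A" using e cc FsE by auto
  have "((A,c,c),(insert {c,c'} A, c', c)) \<in> moves" using moves.add_u[OF _ _ eE'] sc by blast
  moreover note add_move_u[OF _ _ eE', of c] sc
  moreover have "card (sym_diff (insert e A) Fs) < card (sym_diff A Fs)"
    using sym_diff_insert[OF e(2) e(1)] card_Diff1_less[OF sym_diff_finite[OF p(1) FsE], of e] by simp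
  ultimately show ?thesis using walk cc(2) by (meson rtrancl_into_rtrancl)
qed

text \<open>From a saturated state, delete the edge {u,y} at u that is not in Fs.  If y = v we reach a
  diagonal state; otherwise y now has degree 1 and its missing edge {y,m} lies in Fs, so adding
  it gives a saturated state.\<close>

lemma saturated_descent:
  assumes Fs: "two_factor Fs" and s: "(A,u,v) \<in> \<R>" and f: "saturated A u v"
  shows "\<exists>A' u' v'. (A',u',v') \<in> \<R> \<and> (u' = v' \<or> saturated A' u' v') \<and> ((A,u,v),(A',u',v')) \<in> moves\<^sup>* \<and>
    card (sym_diff A' Fs) < card (sym_diff A Fs)"
proof -
  note p = state_profile[OF s]
  have FsE: "Fs \<subseteq> E" using Fs unfolding two_factor_def by simp
  have fin: "finite (sym_diff A Fs)" using sym_diff_finite[OF p(1) FsE] .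
  obtain y where y: "{u,y} \<in> E" "{u,y} \<notin> Fs" "\<And>t. {u,t} \<in> E \<Longrightarrow> {u,t} \<notin> Fs \<Longrightarrow> t = y"
    using other_edge[OF FsE p(2)] Fs p(2) unfolding two_factor_def by metis
  have uyA: "{u,y} \<in> A" using deg3_has_edge[OF p(1) p(2) _ y(1)] f unfolding saturated_def by simp
  let ?A1 = "A - {{u,y}}"
  have m1: "((A,u,v),(?A1, y, v)) \<in> moves" using moves.del_u[OF s f uyA] .
  note r1 = del_move_u[OF s f uyA]
  have sd1: "card (sym_diff ?A1 Fs) < card (sym_diff A Fs)"
    using sym_diff_remove[OF uyA y(2)] card_Diff1_less[OF fin, of "{u,y}"] by simp
  show ?thesis
  proof (cases "y = v")
    case True
    then show ?thesis using r1(1) m1 sd1 by blast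
  next
    case False
    have yV: "y \<in> V" using edge_in_V y(1) by simp
    have "deg A y = 2" using p(4)[OF yV] edge_neq[OF y(1)] False by simp
    then obtain m where m: "{y,m} \<in> E" "{y,m} \<notin> A" using other_edge[OF p(1) yV] by metis
    have m2ne: "{y,m} \<notin> ?A1" using m(2) by simp
    have m2: "((?A1, y, v),(insert {y,m} ?A1, m, v)) \<in> moves" using moves.add_u[OF r1(1) r1(2) m(1) m2ne] .
    note r2 = add_move_u[OF r1(1) r1(2) m(1) m2ne]
    have ymFs: "{y,m} \<in> Fs"
    proof (rule ccontr)
      assume "{y,m} \<notin> Fs"
      obtain t where t: "\<And>r. {y,r} \<in> E \<Longrightarrow> {y,r} \<notin> Fs \<Longrightarrow> r = t"
        using other_edge[OF FsE yV] Fs yV unfolding two_factor_def by metis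
      have "m = t" using t m(1) \<open>{y,m} \<notin> Fs\<close> by simp
      moreover have "u = t" using t[of u] y(1,2) by (simp add: insert_commute)
      ultimately show False using m(2) uyA by (simp add: insert_commute)
    qed
    have "finite (sym_diff ?A1 Fs)" using sym_diff_finite[OF _ FsE, of ?A1] p(1) by auto
    then have "card (sym_diff (insert {y,m} ?A1) Fs) < card (sym_diff ?A1 Fs)"
      using sym_diff_insert[OF m2ne ymFs] card_Diff1_less[of "sym_diff ?A1 Fs" "{y,m}"] by simp
    then show ?thesis using r2 m1 m2 sd1 by (meson order.strict_trans converse_rtrancl_into_rtrancl r_into_rtrancl)
  qed
qed

lemma reach_factor_state:
  assumes Fs: "two_factor Fs" and conn: "connected_graph V E"
  shows "(A,u,v) \<in> \<R> \<Longrightarrow> (u = v \<or> saturated A u v) \<Longrightarrow> \<exists>x\<in>V. ((A,u,v),(Fs,x,x)) \<in> moves\<^sup>*"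
proof (induction "card (sym_diff A Fs)" arbitrary: A u v rule: less_induct)
  case less
  consider "u = v" "A = Fs" | "u = v" "A \<noteq> Fs" | "saturated A u v" using less.prems(2) by blast
  then show ?case
  proof cases
    case 1 then show ?thesis using state_profile(2)[OF less.prems(1)] by blast
  next
    case 2
    then show ?thesis using diag_descent[OF Fs conn] less.prems(1) less.hyps by (meson rtrancl_trans)
  next
    case 3
    then show ?thesis using saturated_descent[OF Fs less.prems(1)] less.hyps by (meson rtrancl_trans)
  qed
qed

text \<open>Every state reaches (Fs,x0,x0): an unsaturated state with distinct defects first adds an edge
  at its defect of degree 1, which makes it saturated.\<close>

lemma reach_base_state:
  assumes Fs: "two_factor Fs" and conn: "connected_graph V E" and x0: "x0 \<in> V" and s: "s \<in> \<R>"
  shows "(s, (Fs,x0,x0)) \<in> moves\<^sup>*"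
proof -
  obtain A u v where suv: "s = (A,u,v)" by (cases s) auto
  have sS: "(A,u,v) \<in> \<R>" using s suv by simp
  note p = state_profile[OF sS]
  have fin: "(B,a,b) \<in> \<R> \<Longrightarrow> (a = b \<or> saturated B a b) \<Longrightarrow> ((B,a,b),(Fs,x0,x0)) \<in> moves\<^sup>*" for B a b
  proof -
    assume h: "(B,a,b) \<in> \<R>" "a = b \<or> saturated B a b"
    obtain x where "x \<in> V" "((B,a,b),(Fs,x,x)) \<in> moves\<^sup>*" using reach_factor_state[OF Fs conn h] by blast
    then show ?thesis using factor_defect_anywhere[OF Fs conn _ x0] by (meson rtrancl_trans)
  qed
  show ?thesis
  proof (cases "u = v \<or> saturated A u v")
    case True then show ?thesis using fin[OF sS] suv by simp
  next
    case False
    then have nf: "\<not> saturated A u v" "u \<noteq> v" by auto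
    then have "deg A u = 1 \<or> deg A v = 1" using p(6) unfolding saturated_def by auto
    then show ?thesis
    proof
      assume "deg A u = 1"
      then obtain y where y: "{u,y} \<in> E" "{u,y} \<notin> A" using deg1_non_edge[OF p(1) p(2)] by metis
      have m: "((A,u,v),(insert {u,y} A, y, v)) \<in> moves" using moves.add_u[OF sS nf(1) y] .
      note r = add_move_u[OF sS nf(1) y]
      show ?thesis using fin[OF r(1)] r(2) m suv by (meson converse_rtrancl_into_rtrancl)
    next
      assume "deg A v = 1"
      then obtain y where y: "{v,y} \<in> E" "{v,y} \<notin> A" using deg1_non_edge[OF p(1) p(3)] by metis
      have m: "((A,u,v),(insert {v,y} A, u, y)) \<in> moves" using moves.add_v[OF sS nf(1) y] .
      note r = add_move_v[OF sS nf(1) y]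
      show ?thesis using fin[OF r(1)] r(2) m suv by (meson converse_rtrancl_into_rtrancl)
    qed
  qed
qed

section \<open>Existence of a 2-factor\<close>

lemma side_flip:
  assumes X: "\<forall>e\<in>E. card (e \<inter> X) = 1" and e: "{x,y} \<in> E"
  shows "x \<in> X \<longleftrightarrow> y \<notin> X"
proof -
  have xy: "x \<noteq> y" using edge_neq e .
  have c: "card ({x,y} \<inter> X) = 1" using X e by auto
  show ?thesis
  proof (cases "x \<in> X")
    case True
    show ?thesis
    proof (rule iffI)
      show "y \<notin> X"
      proof
        assume "y \<in> X"
        then have "{x,y} \<inter> X = {x,y}" using True by auto
        then show False using c xy by simp
      qed
    qed (use True in simp)
  next
    case False
    have "y \<in> X"
    proof (rule ccontr)
      assume "y \<notin> X"
      then have "{x,y} \<inter> X = {}" using False by auto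
      then show False using c by simp
    qed
    then show ?thesis using False by simp
  qed
qed

lemma side_exists:
  assumes bip: "bipartite V E" and aV: "a \<in> V"
  shows "\<exists>X. a \<in> X \<and> (\<forall>e\<in>E. card (e \<inter> X) = 1)"
proof -
  obtain X where X: "X \<subseteq> V" "\<forall>e\<in>E. card (e \<inter> X) = 1" using bip unfolding bipartite_def by auto
  show ?thesis
  proof (cases "a \<in> X")
    case True then show ?thesis using X by blast
  next
    case False
    have "\<forall>e\<in>E. card (e \<inter> (V - X)) = 1"
    proof
      fix e assume e: "e \<in> E"
      then obtain x y where xy: "x \<in> V" "y \<in> V" "x \<noteq> y" "e = {x,y}" using edgeE by blast
      have "x \<in> X \<longleftrightarrow> y \<notin> X" using side_flip[OF X(2)] e xy by simp
      then have "e \<inter> (V - X) = {y} \<or> e \<inter> (V - X) = {x}" using xy by auto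
      then show "card (e \<inter> (V - X)) = 1" by auto
    qed
    then show ?thesis using False aV by blast
  qed
qed

definition alt_step :: "'a set \<Rightarrow> 'a set set \<Rightarrow> 'a \<Rightarrow> 'a \<Rightarrow> bool" where
  "alt_step X A x y \<longleftrightarrow> x \<in> X \<and> y \<in> X \<and> (\<exists>t. {x,t} \<in> E \<and> {t,y} \<in> E \<and> {t,y} \<notin> A)"

lemma alt_path_transfer:
  assumes X: "\<forall>e\<in>E. card (e \<inter> X) = 1" and tX: "t \<notin> X"
  shows "rtrancl_path (alt_step X A) p qs z \<Longrightarrow> y \<notin> set qs \<Longrightarrow> rtrancl_path (alt_step X (insert {t,y} (A - {{a,t}}))) p qs z"
proof (induction rule: rtrancl_path.induct)
  case (base x) then show ?case by (simp add: rtrancl_path.base)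
next
  case (step x q ys z)
  have "alt_step X (insert {t,y} (A - {{a,t}})) x q"
  proof -
    obtain s where s: "x \<in> X" "q \<in> X" "{x,s} \<in> E" "{s,q} \<in> E" "{s,q} \<notin> A" using step(1) unfolding alt_step_def by blast
    have "q \<noteq> y" using step(4) by auto
    moreover have "q \<noteq> t" using s(2) tX by auto
    ultimately have "{s,q} \<noteq> {t,y}" by (auto simp: doubleton_eq_iff)
    then have "{s,q} \<notin> insert {t,y} (A - {{a,t}})" using s(5) by simp
    then show ?thesis unfolding alt_step_def using s by blast
  qed
  moreover have "rtrancl_path (alt_step X (insert {t,y} (A - {{a,t}}))) q ys z" using step by simp
  ultimately show ?case by (rule rtrancl_path.step)
qed

text \<open>From a saturated state (A,a,b), an alternating path from a to a neighbour z of b yields a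
  diagonal state: flip along the path (delete {a,t}, add {t,y}, ...) and finally delete {z,b}.
  Its edge set is a 2-factor.\<close>

lemma two_factor_from_alt_path:
  assumes X: "\<forall>e\<in>E. card (e \<inter> X) = 1"
  shows "rtrancl_path (alt_step X A) a xs z \<Longrightarrow> distinct (a # xs) \<Longrightarrow> (A,a,b) \<in> \<R> \<Longrightarrow> saturated A a b \<Longrightarrow> a \<in> X
    \<Longrightarrow> {z,b} \<in> E \<Longrightarrow> \<exists>F. two_factor F"
proof (induction xs arbitrary: a A)
  case Nil
  have "a = z" using Nil(1) by (cases rule: rtrancl_path.cases) auto
  then have ab: "{a,b} \<in> E" using Nil by simp
  note p = state_profile[OF Nil(3)]
  have "deg A a = 3" using Nil(4) unfolding saturated_def by simp
  then have "{a,b} \<in> A" using deg3_has_edge[OF p(1) p(2) _ ab] by simp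
  then have "(A - {{a,b}}, b, b) \<in> \<R>" using del_move_u(1)[OF Nil(3) Nil(4)] by simp
  then show ?case using diag_state_two_factor by blast
next
  case (Cons y ys)
  note p = state_profile[OF Cons(4)]
  have da: "deg A a = 3" using Cons(5) unfolding saturated_def by simp
  show ?case
  proof (cases "{a,b} \<in> E")
    case True
    then have "{a,b} \<in> A" using deg3_has_edge[OF p(1) p(2) da] by simp
    then have "(A - {{a,b}}, b, b) \<in> \<R>" using del_move_u(1)[OF Cons(4) Cons(5)] by simp
    then show ?thesis using diag_state_two_factor by blast
  next
    case False
    have Jy: "alt_step X A a y" and rest: "rtrancl_path (alt_step X A) y ys z"
      using Cons(2) by (cases rule: rtrancl_path.cases; auto)+
    obtain t where t: "{a,t} \<in> E" "{t,y} \<in> E" "{t,y} \<notin> A" "y \<in> X" using Jy unfolding alt_step_def by blast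
    have atA: "{a,t} \<in> A" using deg3_has_edge[OF p(1) p(2) da t(1)] .
    have tX: "t \<notin> X" using side_flip[OF X t(1)] Cons(6) by simp
    let ?A1 = "A - {{a,t}}"
    note r1 = del_move_u[OF Cons(4) Cons(5) atA]
    have ty1: "{t,y} \<notin> ?A1" using t(3) by simp
    note r2 = add_move_u[OF r1(1) r1(2) t(2) ty1]
    have rest': "rtrancl_path (alt_step X (insert {t,y} ?A1)) y ys z"
      using alt_path_transfer[OF X tX rest, of y a] Cons(3) by simp
    have dist: "distinct (y # ys)" using Cons(3) by simp
    show ?thesis using Cons.IH[OF rest' dist r2(1) r2(2) t(4) Cons(7)] .
  qed
qed

definition neighbours :: "'a set \<Rightarrow> 'a set" where
  "neighbours Z = {t \<in> V. \<exists>z\<in>Z. {z,t} \<in> E}"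

text \<open>Hall's condition for a cubic bipartite graph: a set Z on one side X has at least card Z
  neighbours, since its 3 card Z edges are distinct and all end in neighbours Z.\<close>

lemma hall_condition:
  assumes X: "\<forall>e\<in>E. card (e \<inter> X) = 1" and ZX: "Z \<subseteq> X" and ZV: "Z \<subseteq> V"
  shows "card Z \<le> card (neighbours Z)"
proof -
  have finZ: "finite Z" using finite_subset[OF ZV finV] .
  have finN: "finite (neighbours Z)" unfolding neighbours_def using finV by simp
  have disj: "\<forall>i\<in>Z. \<forall>j\<in>Z. i \<noteq> j \<longrightarrow> incident E i \<inter> incident E j = {}"
  proof (intro ballI impI)
    fix i j assume ij: "i \<in> Z" "j \<in> Z" "i \<noteq> j"
    show "incident E i \<inter> incident E j = {}"
    proof (rule equals0I)
      fix e assume "e \<in> incident E i \<inter> incident E j"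
      then have e: "e \<in> E" "i \<in> e" "j \<in> e" unfolding incident_def by auto
      then have "e = {i,j}" using edge_two[OF subset_refl] ij by blast
      then have "i \<in> X \<longleftrightarrow> j \<notin> X" using side_flip[OF X] e by simp
      then show False using ij ZX by auto
    qed
  qed
  have "card (\<Union>z\<in>Z. incident E z) = (\<Sum>z\<in>Z. card (incident E z))"
    using card_UN_disjoint[OF finZ _ disj] finite_incident[OF finE] by blast
  also have "\<dots> = (\<Sum>z\<in>Z. 3)" using ZV deg_E unfolding deg_def by (intro sum.cong) auto
  finally have edges_Z: "card (\<Union>z\<in>Z. incident E z) = 3 * card Z" by simp
  have sub: "(\<Union>z\<in>Z. incident E z) \<subseteq> (\<Union>t\<in>neighbours Z. incident E t)"
  proof
    fix e assume "e \<in> (\<Union>z\<in>Z. incident E z)"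
    then obtain z where z: "z \<in> Z" "e \<in> E" "z \<in> e" unfolding incident_def by auto
    then obtain t where t: "e = {z,t}" using edge_at by blast
    then have "t \<in> neighbours Z" unfolding neighbours_def using z edge_in_V by blast
    moreover have "e \<in> incident E t" using z t unfolding incident_def by auto
    ultimately show "e \<in> (\<Union>t\<in>neighbours Z. incident E t)" by blast
  qed
  have "(\<Union>t\<in>neighbours Z. incident E t) \<subseteq> E" unfolding incident_def by auto
  then have "finite (\<Union>t\<in>neighbours Z. incident E t)" using finite_subset finE by blast
  then have "3 * card Z \<le> card (\<Union>t\<in>neighbours Z. incident E t)"
    using card_mono[OF _ sub] edges_Z by simp
  also have "\<dots> \<le> (\<Sum>t\<in>neighbours Z. card (incident E t))" using card_UN_le[OF finN] .
  also have "\<dots> = (\<Sum>t\<in>neighbours Z. 3)" using deg_E unfolding deg_def neighbours_def by (intro sum.cong) auto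
  finally show ?thesis by simp
qed

lemma saturated_missing_edge_unique:
  assumes s: "(A,a,b) \<in> \<R>" and f: "saturated A a b"
    and e1: "{m,t1} \<in> E" "{m,t1} \<notin> A" and e2: "{m,t2} \<in> E" "{m,t2} \<notin> A"
  shows "t1 = t2"
proof -
  note p = state_profile[OF s]
  have "m \<noteq> a" "m \<noteq> b" using deg3_has_edge[OF p(1) p(2)] deg3_has_edge[OF p(1) p(3)] e1 f
    unfolding saturated_def by auto
  moreover have mV: "m \<in> V" using edge_in_V e1(1) by simp
  ultimately have "deg A m = 2" using p(4) by simp
  then obtain y where "\<And>z. {m,z} \<in> E \<Longrightarrow> {m,z} \<notin> A \<Longrightarrow> z = y" using other_edge[OF p(1) mV] by metis
  then show ?thesis using e1 e2 by metis
qed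

text \<open>Otherwise let Z be the set reached: each neighbour t of Z has degree 2 and its missing edge
  leads back into Z - {a}; this gives an injection of neighbours Z into Z - {a}, contradicting
  Hall's condition.\<close>

lemma alt_closure_reaches_partner:
  assumes X: "\<forall>e\<in>E. card (e \<inter> X) = 1" and aX: "a \<in> X"
    and s: "(A,a,b) \<in> \<R>" and f: "saturated A a b"
  shows "\<exists>z. (alt_step X A)\<^sup>*\<^sup>* a z \<and> {z,b} \<in> E"
proof (rule ccontr)
  assume none: "\<not> ?thesis"
  note p = state_profile[OF s]
  have da: "deg A a = 3" using f unfolding saturated_def by auto
  define Z where "Z = {z. (alt_step X A)\<^sup>*\<^sup>* a z}"
  have aZ: "a \<in> Z" unfolding Z_def by simp
  have ZVX: "z \<in> V \<and> z \<in> X" if "z \<in> Z" for z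
    using that unfolding Z_def mem_Collect_eq
  proof (induction rule: rtranclp_induct)
    case base then show ?case using p(2) aX by simp
  next
    case (step y z) then show ?case unfolding alt_step_def using edge_in_V by blast
  qed
  have finZ: "finite Z" using finite_subset[of Z V] ZVX finV by blast
  define f where "f t = (SOME m. {t,m} \<in> E \<and> {t,m} \<notin> A)" for t
  have f_prop: "{t, f t} \<in> E \<and> {t, f t} \<notin> A \<and> f t \<in> Z - {a}" if t: "t \<in> neighbours Z" for t
  proof -
    obtain z where z: "z \<in> Z" "{z,t} \<in> E" "t \<in> V" using t unfolding neighbours_def by blast
    have tX: "t \<notin> X" using side_flip[OF X z(2)] ZVX z(1) by auto
    have "t \<noteq> b" using none z unfolding Z_def by auto
    moreover have "t \<noteq> a" using tX aX by auto
    ultimately have "deg A t = 2" using p(4)[OF z(3)] by simp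
    then obtain m where "{t,m} \<in> E" "{t,m} \<notin> A" using other_edge[OF p(1) z(3)] by metis
    then have fm: "{t, f t} \<in> E" "{t, f t} \<notin> A"
      unfolding f_def using someI[of "\<lambda>m. {t,m} \<in> E \<and> {t,m} \<notin> A"] by blast+
    have "f t \<in> X" using side_flip[OF X fm(1)] tX by simp
    then have "alt_step X A z (f t)" unfolding alt_step_def using z ZVX fm by (auto simp: insert_commute)
    then have "f t \<in> Z" using z(1) unfolding Z_def by (simp add: rtranclp.rtrancl_into_rtrancl)
    moreover have "f t \<noteq> a"
      using deg3_has_edge[OF p(1) p(2) da, of t] fm by (auto simp: insert_commute)
    ultimately show ?thesis using fm by simp
  qed
  have "inj_on f (neighbours Z)"
  proof (rule inj_onI)
    fix t1 t2 assume t: "t1 \<in> neighbours Z" "t2 \<in> neighbours Z" "f t1 = f t2"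
    then have "{f t1,t1} \<in> E" "{f t1,t1} \<notin> A" "{f t1,t2} \<in> E" "{f t1,t2} \<notin> A"
      using f_prop[OF t(1)] f_prop[OF t(2)] by (auto simp: insert_commute)
    then show "t1 = t2" by (rule saturated_missing_edge_unique[OF s f])
  qed
  then have "card (neighbours Z) \<le> card (Z - {a})"
    using card_inj_on_le[of f "neighbours Z" "Z - {a}"] f_prop finZ by auto
  also have "\<dots> < card Z" using card_Diff1_less[OF finZ aZ] .
  also have "\<dots> \<le> card (neighbours Z)" using hall_condition[OF X] ZVX by blast
  finally show False by simp
qed

lemma two_factor_exists:
  assumes bip: "bipartite V E" and s: "(A,a,b) \<in> \<R>" and f: "saturated A a b"
  shows "\<exists>F. two_factor F"
proof -
  obtain X where X: "a \<in> X" "\<forall>e\<in>E. card (e \<inter> X) = 1"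
    using side_exists[OF bip state_profile(2)[OF s]] by blast
  obtain z where z: "(alt_step X A)\<^sup>*\<^sup>* a z" "{z,b} \<in> E"
    using alt_closure_reaches_partner[OF X(2) X(1) s f] by blast
  then obtain xs where "rtrancl_path (alt_step X A) a xs z" using rtranclp_eq_rtrancl_path by metis
  then obtain xs' where xs': "rtrancl_path (alt_step X A) a xs' z" "distinct (a # xs')"
    using rtrancl_path_distinct by metis
  show ?thesis using two_factor_from_alt_path[OF X(2) xs' s f X(1) z(2)] .
qed

section \<open>Classification of the states\<close>

text \<open>The cycle is traced by a maximal walk
  from a second neighbour of v after removing the two edges at v.\<close>

lemma cycle_at_hub:
  assumes AE: "A \<subseteq> E" and c3: "deg A v = 3" and e0: "{x0, v} \<in> A"
    and x0Y: "x0 \<in> Y" and vY: "v \<notin> Y"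
    and closedY: "\<And>x y. x \<in> Y \<Longrightarrow> {x,y} \<in> A \<Longrightarrow> y \<in> Y \<or> (y = v \<and> x = x0)"
    and deg2: "\<And>x. x \<in> V \<Longrightarrow> x \<notin> Y \<Longrightarrow> x \<noteq> v \<Longrightarrow> deg A x = 2"
  shows "\<exists>c. is_cycle A c \<and> last c = v \<and> set c \<inter> Y = {} \<and> incident A v \<subseteq> insert {x0,v} (cycle_edges c)
     \<and> (\<forall>x\<in>set c. x \<noteq> v \<longrightarrow> incident A x \<subseteq> cycle_edges c)"
proof -
  have finA': "finite A" using finA[OF AE] .
  have finI: "finite (incident A v)" using finite_incident[OF finA'] .
  have "card (incident A v - {{x0,v}}) = 2" using c3 e0 finI unfolding deg_def incident_def by simp
  then have "incident A v - {{x0,v}} \<noteq> {}" by (metis card.empty zero_neq_numeral)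
  then obtain e1 where e1: "e1 \<in> incident A v" "e1 \<noteq> {x0,v}" by blast
  then have "e1 \<in> A" "v \<in> e1" unfolding incident_def by auto
  then obtain b1 where b1: "e1 = {v,b1}" "{v,b1} \<in> A" using edge_at AE by blast
  have vb1E: "{v,b1} \<in> E" using b1(2) AE by auto
  have b1v: "b1 \<noteq> v" and b1V: "b1 \<in> V" using edge_neq[OF vb1E] edge_in_V[OF vb1E] by auto
  have b1Y: "b1 \<notin> Y"
    using closedY[of b1 v] b1 e1(2) vY by (auto simp: insert_commute)
  have b1x0: "b1 \<noteq> x0" using b1Y x0Y by auto
  define G where "G = A - {{v,b1}, {x0,v}}"
  have GA: "G \<subseteq> A" unfolding G_def by auto
  have incG: "incident G x = incident A x - {{v,b1},{x0,v}}" for x unfolding G_def incident_Diff by simp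
  have "incident G b1 = incident A b1 - {{v,b1}}" using incG[of b1] b1x0 b1v unfolding incident_def by auto
  moreover have "{v,b1} \<in> incident A b1" using b1(2) unfolding incident_def by auto
  ultimately have "deg G b1 = 1" using deg2[OF b1V b1Y b1v] finite_incident[OF finA'] unfolding deg_def by simp
  then obtain q where q: "max_walk G {} b1 q"
    using max_walk_exists[OF finite_subset[OF GA finA'] doubleton_edges_subset[OF doubleton_edges_sub[OF AE] GA]]
    by blast
  note qf = max_walk_facts[OF q]
  have qne: "q \<noteq> []" using qf(2) by auto
  have avoid: "i < length q \<Longrightarrow> q!i \<notin> Y" for i
  proof (rule backward_avoid[of 0 q Y i])
    fix j assume j: "0 \<le> j" "Suc j < length q" "q!Suc j \<in> Y"
    have "{q!j, q!Suc j} \<in> G" using path_edge_in[OF j(2)] qf(4) by auto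
    then have ed: "{q!Suc j, q!j} \<in> A" "{q!j, q!Suc j} \<noteq> {x0,v}" unfolding G_def by (auto simp: insert_commute)
    show "q!j \<in> Y" using closedY[OF j(3) ed(1)] ed(2) by (auto simp: insert_commute)
  next
    show "q!0 \<notin> Y" using qf(3) qne b1Y by (simp add: hd_conv_nth)
  qed simp_all
  have qY: "set q \<inter> Y = {}" using avoid by (auto simp: in_set_conv_nth)
  have zv: "last q = v"
  proof (rule ccontr)
    assume zv: "last q \<noteq> v"
    have "{q!(length q - 2), last q} \<in> A" using last_edge_in[OF qf(2)] qf(4) GA by auto
    then have "last q \<in> V" using edge_in_V AE by auto
    moreover have "last q \<notin> Y" using qY last_in_set[OF qne] by blast
    ultimately have "deg A (last q) = 2" using deg2 zv by simp
    moreover have "last q \<noteq> b1" using last_neq_hd[OF qf(1,2)] qf(3) by simp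
    then have "incident G (last q) = incident A (last q)"
      using incG[of "last q"] zv \<open>last q \<notin> Y\<close> x0Y unfolding incident_def by auto
    ultimately show False using qf(5) unfolding deg_def by simp
  qed
  have vb1: "{v,b1} \<notin> G" unfolding G_def by simp
  note cyc = max_walk_closes_cycle[OF q GA b1(2) vb1 zv]
  have "length q - 2 < length q" using qf(2) by simp
  then have "q!(length q - 2) \<noteq> x0" using avoid x0Y by blast
  then have "incident A v = {{x0,v}, {v,b1}, {q!(length q - 2), v}}"
  proof (intro card3_eq_triple finI)
    show "card (incident A v) = 3" using c3 unfolding deg_def .
    show "{x0,v} \<in> incident A v" "{v,b1} \<in> incident A v" using e0 b1(2) unfolding incident_def by auto
    show "{q!(length q - 2), v} \<in> incident A v" using cyc(5) qf(4) GA unfolding incident_def by auto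
    show "{x0,v} \<noteq> {v,b1}" using e1(2) b1(1) by (simp add: insert_commute)
  qed (use cyc(3,4) in \<open>auto simp: doubleton_eq_iff\<close>)
  then have "incident A v \<subseteq> insert {x0,v} (cycle_edges q)" using cyc(2,5) by auto
  moreover have "incident A x \<subseteq> cycle_edges q" if x: "x \<in> set q" "x \<noteq> v" for x
  proof -
    have "x \<noteq> x0" using x(1) qY x0Y by blast
    then have "incident A x \<subseteq> insert {v,b1} (incident G x)" using incG x(2) unfolding incident_def by auto
    then show ?thesis using cyc(6)[OF x] cyc(2) by auto
  qed
  ultimately show ?thesis using cyc(1) zv qY by blast
qed

text \<open>In a 2-regular spanning subgraph every vertex u lies on a cycle that carries all edges at
  its vertices: remove one edge {u,b} and follow the maximal walk from b, which must end at u.\<close>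

lemma cycle_in_two_regular:
  assumes AE: "A \<subseteq> E" and d2: "\<And>x. x \<in> V \<Longrightarrow> deg A x = 2" and uV: "u \<in> V"
  shows "\<exists>c. is_cycle A c \<and> last c = u \<and> (\<forall>x\<in>set c. incident A x \<subseteq> cycle_edges c)"
proof -
  have finA': "finite A" using finA[OF AE] .
  have finI: "finite (incident A x)" for x using finite_incident[OF finA'] .
  have "incident A u \<noteq> {}" using d2[OF uV] unfolding deg_def by (intro notI) simp
  then obtain b where b: "{u,b} \<in> A" using edge_at AE unfolding incident_def by blast
  have bV: "b \<in> V" using edge_in_V b AE by auto
  define G where "G = A - {{u,b}}"
  have GA: "G \<subseteq> A" unfolding G_def by auto
  have incG: "incident G x = incident A x - {{u,b}}" for x unfolding G_def incident_Diff by simp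
  have "{u,b} \<in> incident A b" using b unfolding incident_def by auto
  then have "deg G b = 1" using d2[OF bV] finI incG[of b] unfolding deg_def by simp
  then obtain q where q: "max_walk G {} b q"
    using max_walk_exists[OF finite_subset[OF GA finA'] doubleton_edges_subset[OF doubleton_edges_sub[OF AE] GA]]
    by blast
  note qf = max_walk_facts[OF q]
  have zu: "last q = u"
  proof (rule ccontr)
    assume zu: "last q \<noteq> u"
    have "{q!(length q - 2), last q} \<in> A" using last_edge_in[OF qf(2)] qf(4) GA by auto
    then have "last q \<in> V" using edge_in_V AE by auto
    moreover have "last q \<noteq> b" using last_neq_hd[OF qf(1,2)] qf(3) by simp
    then have "incident G (last q) = incident A (last q)" using incG[of "last q"] zu unfolding incident_def by auto
    ultimately show False using qf(5) d2 unfolding deg_def by simp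
  qed
  have ub: "{u,b} \<notin> G" unfolding G_def by simp
  note cyc = max_walk_closes_cycle[OF q GA b ub zu]
  have "incident A u = {{u,b}, {q!(length q - 2), u}}"
  proof (rule card2_eq_pair)
    show "finite (incident A u)" "card (incident A u) = 2" using finI d2[OF uV] unfolding deg_def by auto
    show "{u,b} \<in> incident A u" using b unfolding incident_def by simp
    show "{q!(length q - 2), u} \<in> incident A u" using cyc(5) qf(4) GA unfolding incident_def by auto
    show "{u,b} \<noteq> {q!(length q - 2), u}" using cyc(3,4) by (auto simp: doubleton_eq_iff)
  qed
  then have "incident A u \<subseteq> cycle_edges q" using cyc(2,5) by auto
  moreover have "incident A x \<subseteq> cycle_edges q" if x: "x \<in> set q" "x \<noteq> u" for x
  proof -
    have "incident A x \<subseteq> insert {u,b} (incident G x)" using incG by auto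
    then show ?thesis using cyc(6)[OF x] cyc(2) by auto
  qed
  ultimately show ?thesis using cyc(1) zu by blast
qed

text \<open>Diagonal states lie in E: the defect lies on a cycle of the 2-factor A.\<close>

lemma diag_state_class_E:
  assumes s: "(A,u,u) \<in> \<R>"
  shows "(A,u,u) \<in> class_E V E"
proof -
  note p = state_profile[OF s]
  have d2: "\<And>x. x \<in> V \<Longrightarrow> deg A x = 2" using p(4) p(5) by (metis)
  obtain c where c: "is_cycle A c" "last c = u" "\<forall>x\<in>set c. incident A x \<subseteq> cycle_edges c"
    using cycle_in_two_regular[OF p(1) d2 p(2)] by blast
  have cne: "c \<noteq> []" using c(1) unfolding is_cycle_def by auto
  have uc: "u \<in> set c" using c(2) cne by auto
  have LA: "cycle_edges c \<subseteq> A" using c(1) unfolding is_cycle_def by simp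
  have h2: "\<forall>e\<in>cycle_edges c. e \<subseteq> set c" using cycle_edges_sub[OF cne] by blast
  have h3: "\<forall>x\<in>set c. (u, x) \<in> (adj_rel (cycle_edges c))\<^sup>*" using cycle_reach[of c "cycle_edges c"] c(2) by auto
  have cl: "comp_verts A u = set c" "comp_edges A u = cycle_edges c"
    using comp_closure[OF LA uc c(3) h2 h3 edges_nonempty[OF p(1)]] by auto
  have "cycle_graph (comp_verts A u) (comp_edges A u)"
    unfolding cycle_graph_def cl using is_cycle_sub[OF c(1)] by blast
  then show ?thesis using s unfolding class_E_def by simp
qed

text \<open>Tadpole case: let a have degree 1, c degree 3 and all other vertices degree 2.  The maximal
  walk from a ends at c (the tail), and the hub lemma at c, applied to the tail without c,
  yields the cycle of the tadpole.\<close>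

lemma tadpole_component:
  assumes AE: "A \<subseteq> E" and da: "deg A a = 1" and dc: "deg A c = 3" and ac: "a \<noteq> c"
    and d2: "\<And>x. x \<in> V \<Longrightarrow> x \<noteq> a \<Longrightarrow> x \<noteq> c \<Longrightarrow> deg A x = 2"
  shows "tadpole_graph (comp_verts A a) (comp_edges A a) \<and> c \<in> comp_verts A a"
proof -
  obtain p where pw: "max_walk A {} a p"
    using max_walk_exists[OF finA[OF AE] doubleton_edges_sub[OF AE] da] by blast
  note pf = max_walk_facts[OF pw]
  have pne: "p \<noteq> []" using pf(2) by auto
  define x0 where "x0 = p!(length p - 2)"
  have leA: "{x0, last p} \<in> A" using last_edge_in[OF pf(2)] pf(4) x0_def by auto
  have zc: "last p = c"
  proof (rule ccontr)
    assume "last p \<noteq> c"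
    moreover have "last p \<in> V" using edge_in_V leA AE by auto
    moreover have "last p \<noteq> a" using last_neq_hd[OF pf(1) pf(2)] pf(3) by simp
    ultimately show False using d2 pf(5) by simp
  qed
  define Y where "Y = set p - {c}"
  have x0c: "x0 \<noteq> c"
    using nth_eq_iff_index_eq[OF pf(1), of "length p - 2" "length p - 1"] zc pne pf(2) x0_def
    by (auto simp: last_conv_nth)
  have x0Y: "x0 \<in> Y" unfolding Y_def x0_def using x0c x0_def pf(2) by auto
  have incY: "incident A x \<subseteq> path_edges p" if x: "x \<in> set p" "x \<noteq> last p" for x
  proof -
    obtain i where "i < length p - 1" "p!i = x" using set_nth_lt_last[OF pf(1) x] by metis
    then show ?thesis using pf(7) by blast
  qed
  have closedY: "y \<in> Y \<or> (y = c \<and> x = x0)" if "x \<in> Y" "{x,y} \<in> A" for x y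
    using path_closed_but_last[OF pf(1,2) incY, of x y] that zc unfolding Y_def x0_def by simp
  have aY: "a \<in> Y" unfolding Y_def using pf(3) pne ac by auto
  have deg2Y: "deg A x = 2" if "x \<in> V" "x \<notin> Y" "x \<noteq> c" for x
    using d2[OF that(1)] that aY by auto
  have cY: "c \<notin> Y" unfolding Y_def by simp
  obtain c1 where c1: "is_cycle A c1" "last c1 = c" "set c1 \<inter> Y = {}"
    "incident A c \<subseteq> insert {x0,c} (cycle_edges c1)" "\<forall>x\<in>set c1. x \<noteq> c \<longrightarrow> incident A x \<subseteq> cycle_edges c1"
    using cycle_at_hub[OF AE dc _ x0Y cY closedY deg2Y] leA zc by blast
  have c1ne: "c1 \<noteq> []" using c1(1) unfolding is_cycle_def by auto
  have cp: "c \<in> set p" using zc pne by auto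
  define X where "X = set c1 \<union> set p"
  define L where "L = cycle_edges c1 \<union> path_edges p"
  have pL: "path_edges p \<subseteq> L" and cL: "cycle_edges c1 \<subseteq> L" unfolding L_def by auto
  have LA: "L \<subseteq> A" unfolding L_def using c1(1) pf(4) unfolding is_cycle_def by auto
  have h1: "\<forall>x\<in>X. incident A x \<subseteq> L"
  proof
    fix x assume x: "x \<in> X"
    consider "x = c" | "x \<in> Y" | "x \<in> set c1 - {c}" using x unfolding X_def Y_def by auto
    then show "incident A x \<subseteq> L"
    proof cases
      case 1 then show ?thesis using c1(4) leA zc last_edge_in[OF pf(2)] pL cL x0_def by auto
    next
      case 2 then show ?thesis using incY pL zc unfolding Y_def by blast
    next
      case 3 then show ?thesis using c1(5) cL by blast
    qed
  qed
  have h2: "\<forall>e\<in>L. e \<subseteq> X" unfolding L_def X_def using cycle_edges_sub[OF c1ne] path_edges_subset by blast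
  have h3: "\<forall>x\<in>X. (a, x) \<in> (adj_rel L)\<^sup>*"
  proof
    fix x assume "x \<in> X"
    have ac': "(a, c) \<in> (adj_rel L)\<^sup>*" using path_reach_mem[OF pL cp] pf(3) by simp
    show "(a, x) \<in> (adj_rel L)\<^sup>*"
    proof (cases "x \<in> set p")
      case True then show ?thesis using path_reach_mem[OF pL True] pf(3) by simp
    next
      case False
      then have "(c, x) \<in> (adj_rel L)\<^sup>*" using cycle_reach[OF cL] c1(2) \<open>x \<in> X\<close> unfolding X_def by auto
      with ac' show ?thesis by (rule rtrancl_trans)
    qed
  qed
  have "a \<in> X" unfolding X_def using pf(3) pne by auto
  then have cl: "comp_verts A a = X" "comp_edges A a = L"
    using comp_closure[OF LA _ h1 h2 h3 edges_nonempty[OF AE]] by auto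
  have "tadpole_graph X L"
    unfolding tadpole_graph_def
  proof (intro exI conjI)
    show "is_cycle L c1" using is_cycle_sub[OF c1(1) cL] .
    show "is_path L (rev p)" using pf(1) pne pL unfolding is_path_def by (simp add: path_edges_rev)
    show "2 \<le> length (rev p)" using pf(2) by simp
    have "set (rev p) \<inter> set c1 = {c}" using c1(2,3) cp c1ne unfolding Y_def by auto
    then show "set (rev p) \<inter> set c1 = {hd (rev p)}" using zc pne by (simp add: hd_rev)
    show "X = set c1 \<union> set (rev p)" unfolding X_def by simp
    show "L = cycle_edges c1 \<union> path_edges (rev p)" unfolding L_def by (simp add: path_edges_rev)
  qed
  then show ?thesis using cl cp unfolding X_def by simp
qed

lemma unsaturated_class_T:
  assumes s: "(A,u,v) \<in> \<R>" and nf: "\<not> saturated A u v" and uv: "u \<noteq> v"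
  shows "(A,u,v) \<in> class_T V E"
proof -
  note p = state_profile[OF s]
  have "(deg A u = 1 \<and> deg A v = 3) \<or> (deg A u = 3 \<and> deg A v = 1)" using p(6)[OF uv] nf unfolding saturated_def by auto
  then have "tadpole_graph (comp_verts A u) (comp_edges A u)"
  proof
    assume d: "deg A u = 1 \<and> deg A v = 3"
    show ?thesis using tadpole_component[OF p(1) _ _ uv] d p(4) by blast
  next
    assume d: "deg A u = 3 \<and> deg A v = 1"
    have "tadpole_graph (comp_verts A v) (comp_edges A v) \<and> u \<in> comp_verts A v"
      using tadpole_component[OF p(1) _ _ uv[symmetric]] d p(4) by blast
    then show ?thesis using comp_same[of u A v] comp_edges_same[of u A v] by simp
  qed
  then show ?thesis using s unfolding class_T_def by simp
qed

text \<open>Saturated states do not lie in E or T: the defect u has degree 3 in its component, whereas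
  cycles have maximum degree 2 and the tail end of a tadpole, having degree 1, would be a defect.\<close>

lemma saturated_not_cycle_tadpole:
  assumes s: "(A,u,v) \<in> \<R>" and f: "saturated A u v"
  shows "(A,u,v) \<notin> class_E V E \<union> class_T V E"
proof
  note p = state_profile[OF s]
  have du: "deg A u = 3" and dv: "deg A v = 3" using f unfolding saturated_def by auto
  have e2A: "doubleton_edges A" using doubleton_edges_sub[OF p(1)] .
  have uc: "u \<in> comp_verts A u" unfolding comp_verts_def by simp
  assume "(A,u,v) \<in> class_E V E \<union> class_T V E"
  then show False
  proof
    assume "(A,u,v) \<in> class_E V E"
    then have "cycle_graph (comp_verts A u) (comp_edges A u)" unfolding class_E_def by simp
    then obtain c where c: "is_cycle (comp_edges A u) c" "comp_verts A u = set c" "comp_edges A u = cycle_edges c"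
      unfolding cycle_graph_def by blast
    have "deg A u = card (incident (cycle_edges c) u)" using comp_inc[OF uc e2A] c(3) unfolding deg_def by simp
    also have "\<dots> \<le> 2" using c(1) unfolding is_cycle_def using cycle_deg_le2[of c u] by simp
    finally show False using du by simp
  next
    assume "(A,u,v) \<in> class_T V E"
    then have "tadpole_graph (comp_verts A u) (comp_edges A u)" unfolding class_T_def by simp
    then obtain c q where t: "is_cycle (comp_edges A u) c" "is_path (comp_edges A u) q" "2 \<le> length q"
      "set q \<inter> set c = {hd q}" "comp_verts A u = set c \<union> set q" "comp_edges A u = cycle_edges c \<union> path_edges q"
      unfolding tadpole_graph_def by blast
    have cne: "c \<noteq> []" using t(1) unfolding is_cycle_def by auto
    have qne: "q \<noteq> []" using t(3) by auto
    have xc: "last q \<in> comp_verts A u" using t(5) qne by auto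
    have inc1: "incident A (last q) = {{q!(length q - 2), last q}}"
      using comp_inc[OF xc e2A] tadpole_tail_end_incident[OF t(2) t(3) t(4) cne] t(6) by simp
    then have d1: "deg A (last q) = 1" unfolding deg_def by simp
    have "{q!(length q - 2), last q} \<in> A" using inc1 unfolding incident_def by auto
    then have xV: "last q \<in> V" using edge_in_V p(1) by auto
    show False
    proof (cases "last q = u \<or> last q = v")
      case True then show ?thesis using d1 du dv by auto
    next
      case False then show ?thesis using p(4)[OF xV] d1 by auto
    qed
  qed
qed

text \<open>An arm of a saturated state (A,u,v) along the edge {u,b}: a path from u through b whose inner
  vertices avoid u and v and carry all their edges on the path, and which either ends at v or
  ends at a vertex z joined to u by an edge of A whose two edges in A are the last path edge
  and {u,z} (so the arm closes into a cycle through u).\<close>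

definition arm :: "'a set set \<Rightarrow> 'a \<Rightarrow> 'a \<Rightarrow> 'a \<Rightarrow> 'a list \<Rightarrow> bool" where
  "arm A u v b p \<longleftrightarrow> distinct p \<and> 2 \<le> length p \<and> hd p = u \<and> p!1 = b \<and> path_edges p \<subseteq> A \<and>
    (\<forall>i. 0 < i \<longrightarrow> i < length p - 1 \<longrightarrow> p!i \<noteq> v \<and> p!i \<noteq> u \<and> incident A (p!i) \<subseteq> path_edges p) \<and>
    (last p = v \<or> (3 \<le> length p \<and> last p \<noteq> v \<and> last p \<noteq> b \<and> {u, last p} \<in> A \<and>
       incident A (last p) = {{p!(length p - 2), last p}, {u, last p}}))"

lemma arm_facts:
  assumes "arm A u v b p"
  shows "distinct p" "2 \<le> length p" "hd p = u" "p!1 = b" "path_edges p \<subseteq> A"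
    "\<And>i. 0 < i \<Longrightarrow> i < length p - 1 \<Longrightarrow> p!i \<noteq> v \<and> p!i \<noteq> u \<and> incident A (p!i) \<subseteq> path_edges p"
    "last p = v \<or> (3 \<le> length p \<and> last p \<noteq> v \<and> last p \<noteq> b \<and> {u, last p} \<in> A \<and>
       incident A (last p) = {{p!(length p - 2), last p}, {u, last p}})"
  using assms unfolding arm_def by auto

lemma arm_inner:
  assumes w: "arm A u v b p" and x: "x \<in> set p" "x \<noteq> u" "x \<noteq> last p"
  shows "incident A x \<subseteq> path_edges p \<and> x \<noteq> v"
proof -
  note wf = arm_facts[OF w]
  have pne: "p \<noteq> []" using wf(2) by auto
  obtain i where i: "i < length p - 1" "p!i = x" using set_nth_lt_last[OF wf(1) x(1) x(3)] by metis
  have "i \<noteq> 0"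
  proof
    assume "i = 0"
    then have "x = u" using i wf(3) pne by (simp add: hd_conv_nth)
    then show False using x(2) by simp
  qed
  then show ?thesis using wf(6)[of i] i by simp
qed

lemma arm_ends:
  assumes w: "arm A u v b p"
  shows "b \<in> set p" "b \<noteq> u" "last p \<in> set p" "last p \<noteq> u"
proof -
  note f = arm_facts[OF w]
  have ne: "p \<noteq> []" using f(2) by auto
  show "b \<in> set p" using f(2,4) nth_mem[of 1 p] by simp
  show "b \<noteq> u" using nth_eq_iff_index_eq[OF f(1), of 1 0] f(2,3,4) ne by (simp add: hd_conv_nth)
  show "last p \<in> set p" using ne by simp
  show "last p \<noteq> u" using last_neq_hd[OF f(1,2)] f(3) by simp
qed

lemma arm_pre_last:
  assumes w: "arm A u v b p" and lp: "last p = v"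
  shows "p!(length p - 2) \<in> set p" "p!(length p - 2) \<noteq> v" "p!(length p - 2) = u \<Longrightarrow> b = v"
    "{p!(length p - 2), v} \<in> path_edges p"
proof -
  note pf = arm_facts[OF w]
  have pne: "p \<noteq> []" using pf(2) by auto
  show "p!(length p - 2) \<in> set p" using pf(2) by simp
  have lv: "v = p!(length p - 1)" using lp pne by (simp add: last_conv_nth)
  show "p!(length p - 2) \<noteq> v"
  proof
    assume "p!(length p - 2) = v"
    then have "p!(length p - 2) = p!(length p - 1)" using lv by simp
    moreover have "length p - 2 < length p" "length p - 1 < length p" "length p - 2 \<noteq> length p - 1" using pf(2) by auto
    ultimately show False using nth_eq_iff_index_eq[OF pf(1), of "length p - 2" "length p - 1"] by simp
  qed
  show "b = v" if "p!(length p - 2) = u"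
  proof -
    have "p!(length p - 2) = p!0" using that pf(3) pne by (simp add: hd_conv_nth)
    then have "length p - 2 = 0" using nth_eq_iff_index_eq[OF pf(1), of "length p - 2" 0] pf(2) pne by auto
    then have "length p = 2" using pf(2) by simp
    then show ?thesis using pf(4) lv by simp
  qed
  show "{p!(length p - 2), v} \<in> path_edges p" using last_edge_in[OF pf(2)] lp by simp
qed

text \<open>To trace an arm along {u,b}, keep only this edge at u.\<close>

definition arm_graph :: "'a set set \<Rightarrow> 'a \<Rightarrow> 'a \<Rightarrow> 'a set set" where
  "arm_graph A u b = A - (incident A u - {{u,b}})"

lemma arm_graph_incident:
  shows "incident (arm_graph A u b) x = incident A x - (incident A u - {{u,b}})"
    and "{u,b} \<in> A \<Longrightarrow> incident (arm_graph A u b) u = {{u,b}}"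
  unfolding arm_graph_def incident_Diff by (auto simp: incident_def)

text \<open>If the maximal walk from u in the arm graph stops at a vertex z \<noteq> v, then z lost an edge,
  which must be an edge {u,z}: the walk returns to u.\<close>

lemma arm_walk_return:
  assumes s: "(A,u,v) \<in> \<R>" and ub: "{u,b} \<in> A"
    and walk: "max_walk (arm_graph A u b) {v} u p" and p1: "p!1 = b" and z: "last p \<noteq> v"
  shows "3 \<le> length p \<and> last p \<noteq> b \<and> {u, last p} \<in> A \<and>
    incident A (last p) = {{p!(length p - 2), last p}, {u, last p}}"
proof -
  note pr = state_profile[OF s]
  note pf = max_walk_facts[OF walk]
  have finI: "finite (incident A x)" for x using finite_incident[OF finA[OF pr(1)]] .
  have pne: "p \<noteq> []" using pf(2) by auto
  have ze: "{p!(length p - 2), last p} \<in> A"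
    using last_edge_in[OF pf(2)] pf(4) unfolding arm_graph_def by auto
  have zu: "last p \<noteq> u" using last_neq_hd[OF pf(1) pf(2)] pf(3) by simp
  have dz: "deg A (last p) = 2" using pr(4) edge_in_V ze pr(1) zu z by auto
  have "deg (arm_graph A u b) (last p) \<noteq> 2" using pf(5) z by simp
  then have "incident (arm_graph A u b) (last p) \<noteq> incident A (last p)" using dz unfolding deg_def by auto
  then obtain e where e: "e \<in> A" "u \<in> e" "last p \<in> e" "e \<noteq> {u,b}"
    using arm_graph_incident(1)[of A u b "last p"] unfolding incident_def by auto
  have ez: "e = {u, last p}" using edge_two[OF pr(1) e(1-3) zu[symmetric]] .
  have zb: "last p \<noteq> b" using e(4) ez by auto
  have l3: "3 \<le> length p"
  proof (rule ccontr)
    assume "\<not> 3 \<le> length p"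
    then have "length p = 2" using pf(2) by simp
    then show False using zb p1 pne by (simp add: last_conv_nth)
  qed
  have "p!(length p - 2) \<noteq> u"
    using nth_eq_iff_index_eq[OF pf(1), of "length p - 2" 0] pf(3) pne l3 by (auto simp: hd_conv_nth)
  then have "incident A (last p) = {{p!(length p - 2), last p}, {u, last p}}"
    using ze e ez zu dz unfolding deg_def
    by (intro card2_eq_pair finI) (auto simp: incident_def doubleton_eq_iff)
  then show ?thesis using l3 zb e(1) ez by simp
qed

lemma arm_exists:
  assumes s: "(A,u,v) \<in> \<R>" and f: "saturated A u v" and ub: "{u,b} \<in> A"
  shows "\<exists>p. arm A u v b p"
proof -
  note pr = state_profile[OF s]
  define G where "G = arm_graph A u b"
  have GA: "G \<subseteq> A" unfolding G_def arm_graph_def by auto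
  have finA': "finite A" using finA[OF pr(1)] .
  have incGu: "incident G u = {{u,b}}" using arm_graph_incident(2)[OF ub] unfolding G_def .
  then have "deg G u = 1" unfolding deg_def by simp
  then obtain p where pw: "max_walk G {v} u p"
    using max_walk_exists[OF finite_subset[OF GA finA'] doubleton_edges_subset[OF doubleton_edges_sub[OF pr(1)] GA]]
    by blast
  note pf = max_walk_facts[OF pw]
  have pne: "p \<noteq> []" using pf(2) by auto
  have pA: "path_edges p \<subseteq> A" using pf(4) GA by auto
  have "{u, p!1} \<in> incident G u" using hd_edge_in[OF pf(2)] pf(3) pf(4) unfolding incident_def by auto
  then have p1: "p!1 = b" using incGu by (auto simp: doubleton_eq_iff)
  have inner: "p!i \<noteq> v \<and> p!i \<noteq> u \<and> incident A (p!i) \<subseteq> path_edges p" if i: "0 < i" "i < length p - 1" for i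
  proof -
    have a: "p!i \<noteq> v" "deg G (p!i) = 2" using pf(6)[OF i] by auto
    have b': "p!i \<noteq> u" using nth_eq_iff_index_eq[OF pf(1), of i 0] i pne pf(3) by (auto simp: hd_conv_nth)
    have "i < length p" using i by simp
    then obtain e where "e \<in> path_edges p" "p!i \<in> e" using path_vertex_in_edge[OF pf(2) nth_mem] by blast
    then have "p!i \<in> V" using pA pr(1) E_Pow by blast
    then have "deg A (p!i) = 2" using pr(4) a b' by simp
    then have "incident G (p!i) = incident A (p!i)"
      using a(2) incident_mono[OF GA] card_subset_eq[OF finite_incident[OF finA']] unfolding deg_def by metis
    then show ?thesis using a b' pf(7)[of i] i by simp
  qed
  have "arm A u v b p"
    unfolding arm_def using pf(1,2,3) p1 pA inner arm_walk_return[OF s ub pw[unfolded G_def] p1] by blast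
  then show ?thesis by blast
qed

text \<open>Two arms along different edges that both end at v share no inner vertex: an arm entering the
  inner part of the other would have to use one of its edges, and so come from u along the
  same first edge.\<close>

lemma arm_disjoint:
  assumes w1: "arm A u v b p" and w2: "arm A u v b' q" and bb: "b \<noteq> b'"
    and lp: "last p = v" and lq: "last q = v" and uv: "u \<noteq> v"
  shows "set q \<inter> (set p - {u,v}) = {}"
proof -
  note pf = arm_facts[OF w1]
  note qf = arm_facts[OF w2]
  define Y where "Y = set p - {u,v}"
  have pne: "p \<noteq> []" and qne: "q \<noteq> []" using pf(2) qf(2) by auto
  have incY: "x \<in> Y \<Longrightarrow> incident A x \<subseteq> path_edges p" for x
    using arm_inner[OF w1, of x] lp unfolding Y_def by auto
  have q1: "q!1 \<notin> Y"
  proof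
    assume "q!1 \<in> Y"
    moreover have "{q!0, q!1} \<in> path_edges q" using path_edge_in[of 0 q] qf(2) by simp
    ultimately have "{q!0, q!1} \<in> path_edges p" using incY qf(5) unfolding incident_def by auto
    moreover have "q!0 = u" using qf(3) qne by (simp add: hd_conv_nth)
    ultimately have "{u, q!1} = {hd p, p!1}" using hd_edge[OF pf(1) pf(2)] pf(3) by simp
    then have "q!1 = p!1" using pf(3) by (auto simp: doubleton_eq_iff)
    then show False using pf(4) qf(4) bb by simp
  qed
  have av: "q!i \<notin> Y" if "1 \<le> i" "i < length q" for i
  proof (rule backward_avoid[of 1 q Y i])
    fix j assume j: "1 \<le> j" "Suc j < length q" "q!Suc j \<in> Y"
    have e: "{q!j, q!Suc j} \<in> A" using path_edge_in[OF j(2)] qf(5) by auto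
    have "{q!j, q!Suc j} \<in> path_edges p" using incY[OF j(3)] e unfolding incident_def by auto
    then have qj: "q!j \<in> set p" using path_edges_subset by blast
    have "q!j \<noteq> u"
    proof
      assume "q!j = u"
      then have "q!j = q!0" using qf(3) qne by (simp add: hd_conv_nth)
      then show False using nth_eq_iff_index_eq[OF qf(1), of j 0] j qne by auto
    qed
    moreover have "q!j \<noteq> v"
    proof
      assume "q!j = v"
      then have "q!j = q!(length q - 1)" using lq qne by (simp add: last_conv_nth)
      then show False using nth_eq_iff_index_eq[OF qf(1), of j "length q - 1"] j qne by auto
    qed
    ultimately show "q!j \<in> Y" using qj unfolding Y_def by simp
  next
    show "q!1 \<notin> Y" by (rule q1)
  qed (use that in simp_all)
  show ?thesis
  proof (rule equals0I)
    fix x assume "x \<in> set q \<inter> (set p - {u,v})"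
    then obtain i where i: "i < length q" "q!i = x" "x \<in> Y" unfolding Y_def by (auto simp: in_set_conv_nth)
    have "i \<noteq> 0"
    proof
      assume "i = 0"
      then have "x = u" using i qf(3) qne by (simp add: hd_conv_nth)
      then show False using i(3) unfolding Y_def by simp
    qed
    then show False using av[of i] i by simp
  qed
qed

lemma arms_to_v:
  assumes w: "arm A u v b P" and w': "arm A u v b' Q" and bb: "b \<noteq> b'"
    and lP: "last P = v" and lQ: "last Q = v" and uv: "u \<noteq> v"
  shows "set P \<inter> set Q = {u,v}" "P!(length P - 2) \<noteq> Q!(length Q - 2)" "P \<noteq> Q"
proof -
  note f = arm_facts[OF w] and f' = arm_facts[OF w']
  have D: "set Q \<inter> (set P - {u,v}) = {}" using arm_disjoint[OF w w' bb lP lQ uv] .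
  have ne: "P \<noteq> []" "Q \<noteq> []" using f(2) f'(2) by auto
  have "u \<in> set P" "u \<in> set Q" "v \<in> set P" "v \<in> set Q"
    using hd_in_set[OF ne(1)] hd_in_set[OF ne(2)] last_in_set[OF ne(1)] last_in_set[OF ne(2)] f(3) f'(3) lP lQ
    by simp_all
  then show "set P \<inter> set Q = {u,v}" using D by blast
  note y = arm_pre_last[OF w lP] and y' = arm_pre_last[OF w' lQ]
  show "P!(length P - 2) \<noteq> Q!(length Q - 2)"
  proof
    assume eq: "P!(length P - 2) = Q!(length Q - 2)"
    show False
    proof (cases "P!(length P - 2) = u")
      case True
      then have "b = v" using y(3) by simp
      moreover have "b' = v" using True eq y'(3) by simp
      ultimately show False using bb by simp
    next
      case False
      then have "P!(length P - 2) \<in> set P - {u,v}" using y(1,2) by simp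
      moreover have "P!(length P - 2) \<in> set Q" using y'(1) eq by simp
      ultimately show False using D by blast
    qed
  qed
  show "P \<noteq> Q" using f(4) f'(4) bb by auto
qed

lemma theta_component:
  assumes s: "(A,u,v) \<in> \<R>" and f: "saturated A u v"
    and w1: "arm A u v b1 P1" and w2: "arm A u v b2 P2" and w3: "arm A u v b3 P3"
    and l1: "last P1 = v" and l2: "last P2 = v" and l3: "last P3 = v"
    and incu: "incident A u = {{u,b1},{u,b2},{u,b3}}" and d: "b1 \<noteq> b2" "b1 \<noteq> b3" "b2 \<noteq> b3"
  shows "theta_graph (comp_verts A u) (comp_edges A u)"
proof -
  note pr = state_profile[OF s]
  have uv: "u \<noteq> v" using f pr(5) unfolding saturated_def by auto
  note f1 = arm_facts[OF w1] and f2 = arm_facts[OF w2] and f3 = arm_facts[OF w3]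
  note a12 = arms_to_v[OF w1 w2 d(1) l1 l2 uv] and a13 = arms_to_v[OF w1 w3 d(2) l1 l3 uv]
    and a23 = arms_to_v[OF w2 w3 d(3) l2 l3 uv]
  note y1 = arm_pre_last[OF w1 l1] and y2 = arm_pre_last[OF w2 l2] and y3 = arm_pre_last[OF w3 l3]
  define z1 where "z1 = P1!(length P1 - 2)"
  define z2 where "z2 = P2!(length P2 - 2)"
  define z3 where "z3 = P3!(length P3 - 2)"
  have incv: "incident A v = {{z1,v},{z2,v},{z3,v}}"
  proof (rule card3_eq_triple)
    show "finite (incident A v)" using finite_incident[OF finA[OF pr(1)]] .
    show "card (incident A v) = 3" using f unfolding saturated_def deg_def by simp
    show "{z1,v} \<in> incident A v" "{z2,v} \<in> incident A v" "{z3,v} \<in> incident A v"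
      using y1(4) y2(4) y3(4) f1(5) f2(5) f3(5) unfolding z1_def z2_def z3_def incident_def by auto
    show "{z1,v} \<noteq> {z2,v}" "{z1,v} \<noteq> {z3,v}" "{z2,v} \<noteq> {z3,v}"
      using a12(2) a13(2) a23(2) y1(2) y2(2) y3(2) unfolding z1_def z2_def z3_def
      by (auto simp: doubleton_eq_iff)
  qed
  define X where "X = set P1 \<union> set P2 \<union> set P3"
  define L where "L = path_edges P1 \<union> path_edges P2 \<union> path_edges P3"
  have s1: "path_edges P1 \<subseteq> L" and s2: "path_edges P2 \<subseteq> L" and s3: "path_edges P3 \<subseteq> L"
    unfolding L_def by auto
  have LA: "L \<subseteq> A" unfolding L_def using f1(5) f2(5) f3(5) by auto
  have h1: "\<forall>x\<in>X. incident A x \<subseteq> L"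
  proof
    fix x assume x: "x \<in> X"
    consider "x = u" | "x = v" | "x \<in> set P1 - {u,v}" | "x \<in> set P2 - {u,v}" | "x \<in> set P3 - {u,v}"
      using x unfolding X_def by auto
    then show "incident A x \<subseteq> L"
    proof cases
      case 1
      have "{u,b1} \<in> L" "{u,b2} \<in> L" "{u,b3} \<in> L"
        using hd_edge_in[OF f1(2)] hd_edge_in[OF f2(2)] hd_edge_in[OF f3(2)] f1(3,4) f2(3,4) f3(3,4) s1 s2 s3
        by auto
      then show ?thesis using incu 1 by auto
    next
      case 2 then show ?thesis using incv y1(4) y2(4) y3(4) s1 s2 s3 unfolding z1_def z2_def z3_def by auto
    next
      case 3 then show ?thesis using arm_inner[OF w1, of x] l1 s1 by auto
    next
      case 4 then show ?thesis using arm_inner[OF w2, of x] l2 s2 by auto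
    next
      case 5 then show ?thesis using arm_inner[OF w3, of x] l3 s3 by auto
    qed
  qed
  have h2: "\<forall>e\<in>L. e \<subseteq> X" unfolding L_def X_def using path_edges_subset by blast
  have h3: "\<forall>x\<in>X. (u, x) \<in> (adj_rel L)\<^sup>*"
    using path_reach_mem[OF s1] path_reach_mem[OF s2] path_reach_mem[OF s3] f1(3) f2(3) f3(3)
    unfolding X_def by auto
  have "u \<in> X" using a12(1) unfolding X_def by blast
  then have cl: "comp_verts A u = X" "comp_edges A u = L"
    using comp_closure[OF LA _ h1 h2 h3 edges_nonempty[OF pr(1)]] by auto
  have "is_path L P1" "is_path L P2" "is_path L P3"
    using f1(1,2) f2(1,2) f3(1,2) s1 s2 s3 unfolding is_path_def by auto
  then show ?thesis unfolding theta_graph_def cl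
    using uv f1(3) f2(3) f3(3) l1 l2 l3 a12 a13 a23 X_def L_def by blast
qed

lemma arm_closes_cycle:
  assumes w: "arm A u v b p" and z: "last p \<noteq> v" and uv: "u \<noteq> v"
  shows "is_cycle A p" "cycle_edges p = insert {last p, u} (path_edges p)" "v \<notin> set p"
    "\<And>x. x \<in> set p \<Longrightarrow> x \<noteq> u \<Longrightarrow> incident A x \<subseteq> cycle_edges p"
proof -
  note f1 = arm_facts[OF w]
  have zf: "3 \<le> length p" "{u, last p} \<in> A"
    "incident A (last p) = {{p!(length p - 2), last p}, {u, last p}}"
    using f1(7) z by auto
  show ce: "cycle_edges p = insert {last p, u} (path_edges p)" unfolding cycle_edges_def using f1(3) by simp
  show "is_cycle A p" unfolding is_cycle_def using zf f1(1,5) ce by (auto simp: insert_commute)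
  show "v \<notin> set p" using arm_inner[OF w, of v] uv z by auto
  show "incident A x \<subseteq> cycle_edges p" if x: "x \<in> set p" "x \<noteq> u" for x
  proof (cases "x = last p")
    case True
    have "{p!(length p - 2), last p} \<in> path_edges p" using last_edge_in[OF f1(2)] by simp
    then show ?thesis using True zf(3) ce by (auto simp: insert_commute)
  next
    case False
    then show ?thesis using arm_inner[OF w x] ce by auto
  qed
qed

text \<open>If the arm along b closes into a cycle, the arm along the third edge {u,c} at u can only
  meet that cycle in u; hence it cannot return to u and must end at v.\<close>

lemma arm_leaves_cycle:
  assumes w1: "arm A u v b p1" and z: "last p1 \<noteq> v" and uv: "u \<noteq> v"
    and w3: "arm A u v c P"
    and incu: "incident A u = {{u,b},{u,last p1},{u,c}}"
    and d: "c \<noteq> b" "c \<noteq> last p1"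
  shows "last P = v" "set P \<inter> set p1 = {u}"
proof -
  note f1 = arm_facts[OF w1] and f3 = arm_facts[OF w3]
  note e1 = arm_ends[OF w1] and e3 = arm_ends[OF w3]
  note cyc = arm_closes_cycle[OF w1 z uv]
  have ne1: "p1 \<noteq> []" and ne3: "P \<noteq> []" using f1(2) f3(2) by auto
  define Y1 where "Y1 = set p1 - {u}"
  have uP: "P!0 = u" using f3(3) ne3 by (simp add: hd_conv_nth)
  have nbrs_u: "y = b \<or> y = last p1 \<or> y = c" if "{u,y} \<in> A" for y
  proof -
    have "{u,y} \<in> incident A u" using that unfolding incident_def by simp
    then show ?thesis using incu by (auto simp: doubleton_eq_iff)
  qed
  have av: "P!i \<notin> Y1" if i: "1 \<le> i" "i < length P" for i
  proof (rule backward_avoid[of 1 P Y1 i])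
    fix j assume j: "1 \<le> j" "Suc j < length P" "P!Suc j \<in> Y1"
    have e: "{P!j, P!Suc j} \<in> A" using path_edge_in[OF j(2)] f3(5) by auto
    have "P!Suc j \<in> set p1" "P!Suc j \<noteq> u" using j(3) unfolding Y1_def by auto
    moreover have "{P!j, P!Suc j} \<in> incident A (P!Suc j)" using e unfolding incident_def by simp
    ultimately have "{P!j, P!Suc j} \<in> cycle_edges p1" using cyc(4) by blast
    then have "P!j \<in> set p1" using cycle_edges_sub[OF ne1] by blast
    moreover have "P!j \<noteq> u" using nth_eq_iff_index_eq[OF f3(1), of j 0] j ne3 uP by auto
    ultimately show "P!j \<in> Y1" unfolding Y1_def by simp
  next
    show "P!1 \<notin> Y1"
    proof
      assume "P!1 \<in> Y1"
      then have "c \<in> set p1" "c \<noteq> u" using f3(4) unfolding Y1_def by auto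
      moreover have "{u,c} \<in> incident A c" using incu unfolding incident_def by auto
      ultimately have "{u,c} \<in> cycle_edges p1" using cyc(4) by blast
      then have "{u,c} = {last p1,u} \<or> {u,c} \<in> path_edges p1" using cyc(2) by simp
      moreover have "{u,c} = {hd p1, p1!1}" if "{u,c} \<in> path_edges p1"
        using hd_edge[OF f1(1) f1(2) that] f1(3) by simp
      ultimately show False using f1(3,4) d \<open>c \<noteq> u\<close> by (auto simp: doubleton_eq_iff)
    qed
  qed (use i in simp_all)
  show lastP: "last P = v"
  proof (rule ccontr)
    assume "last P \<noteq> v"
    then have "{u, last P} \<in> A" "last P \<noteq> c" using f3(7) by auto
    then have "last P = b \<or> last P = last p1" using nbrs_u by blast
    then have "last P \<in> Y1" using e1 unfolding Y1_def by auto
    moreover have "P!(length P - 1) \<notin> Y1" using av[of "length P - 1"] f3(2) by simp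
    ultimately show False using ne3 by (simp add: last_conv_nth)
  qed
  show "set P \<inter> set p1 = {u}"
  proof
    show "set P \<inter> set p1 \<subseteq> {u}"
    proof
      fix x assume x: "x \<in> set P \<inter> set p1"
      then obtain i where i: "i < length P" "P!i = x" by (auto simp: in_set_conv_nth)
      then show "x \<in> {u}" using av[of i] uP x unfolding Y1_def by (cases "i = 0") auto
    qed
    show "{u} \<subseteq> set P \<inter> set p1" using hd_in_set[OF ne1] hd_in_set[OF ne3] f1(3) f3(3) by simp
  qed
qed

text \<open>In the same situation the rest of the component beyond v is a second cycle through v:
  the vertices of the first cycle and of the arm P, except v, form a set closed under the edges
  of A apart from the last edge of P, so the hub lemma applies at v.\<close>

lemma dumbbell_second_cycle:
  assumes s: "(A,u,v) \<in> \<R>" and f: "saturated A u v"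
    and w1: "arm A u v b p1" and z: "last p1 \<noteq> v" and w3: "arm A u v c P"
    and incu: "incident A u = {{u,b},{u,last p1},{u,c}}" and d: "c \<noteq> b" "c \<noteq> last p1"
  shows "\<exists>C2. is_cycle A C2 \<and> last C2 = v \<and> set C2 \<inter> ((set p1 \<union> set P) - {v}) = {} \<and>
    incident A v \<subseteq> insert {P!(length P - 2), v} (cycle_edges C2) \<and>
    (\<forall>x\<in>set C2. x \<noteq> v \<longrightarrow> incident A x \<subseteq> cycle_edges C2)"
proof -
  note pr = state_profile[OF s]
  have uv: "u \<noteq> v" using f pr(5) unfolding saturated_def by auto
  note f1 = arm_facts[OF w1] and f3 = arm_facts[OF w3]
  note cyc = arm_closes_cycle[OF w1 z uv]
  note P = arm_leaves_cycle[OF w1 z uv w3 incu d]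
  have ne1: "p1 \<noteq> []" and ne3: "P \<noteq> []" using f1(2) f3(2) by auto
  note y3 = arm_pre_last[OF w3 P(1)]
  define x0 where "x0 = P!(length P - 2)"
  define Y where "Y = (set p1 \<union> set P) - {v}"
  have e0: "{x0, v} \<in> A" using y3(4) f3(5) x0_def by auto
  have x0Y: "x0 \<in> Y" using y3(1,2) x0_def unfolding Y_def by simp
  have u1: "u \<in> set p1" using hd_in_set[OF ne1] f1(3) by simp
  have closedY: "y \<in> Y \<or> (y = v \<and> x = x0)" if x: "x \<in> Y" and xy: "{x,y} \<in> A" for x y
  proof (cases "x \<in> set p1")
    case True
    show ?thesis
    proof (cases "x = u")
      case xu: True
      then have "{u,y} \<in> incident A u" using xy unfolding incident_def by simp
      then have "y = b \<or> y = last p1 \<or> y = c" using incu by (auto simp: doubleton_eq_iff)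
      moreover have "b \<in> set p1" using f1(2,4) nth_mem[of 1 p1] by simp
      moreover have "c \<in> set P" using f3(2,4) nth_mem[of 1 P] by simp
      moreover have "c = v \<Longrightarrow> x0 = u"
        using nth_eq_iff_index_eq[OF f3(1), of 1 "length P - 1"] f3(2,3,4) P(1) ne3 x0_def
        by (auto simp: last_conv_nth hd_conv_nth)
      ultimately show ?thesis using cyc(3) ne1 xu unfolding Y_def by auto
    next
      case False
      then have "{x,y} \<in> cycle_edges p1" using cyc(4)[OF True] xy unfolding incident_def by auto
      then have "y \<in> set p1" using cycle_edges_sub[OF ne1] by blast
      then show ?thesis using cyc(3) unfolding Y_def by auto
    qed
  next
    case False
    then have xP: "x \<in> set P" "x \<noteq> v" "x \<noteq> u" using x u1 unfolding Y_def by auto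
    have "incident A x \<subseteq> path_edges P" using arm_inner[OF w3 xP(1,3)] xP(2) P(1) by simp
    then have xyP: "{x,y} \<in> path_edges P" using xy unfolding incident_def by auto
    then have yP: "y \<in> set P" using path_edges_subset by blast
    show ?thesis
    proof (cases "y = v")
      case True
      have "{x,y} = {P!(length P - 2), last P}" using last_edge[OF f3(1) f3(2) xyP] True P(1) by simp
      then show ?thesis using True P(1) xP(2) x0_def by (auto simp: doubleton_eq_iff)
    next
      case False then show ?thesis using yP unfolding Y_def by simp
    qed
  qed
  have deg2Y: "deg A x = 2" if "x \<in> V" "x \<notin> Y" "x \<noteq> v" for x
    using pr(4)[OF that(1)] that u1 unfolding Y_def by auto
  have "deg A v = 3" using f unfolding saturated_def by simp
  from cycle_at_hub[OF pr(1) this e0 x0Y _ closedY deg2Y] show ?thesis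
    unfolding Y_def x0_def by simp
qed

lemma dumbbell_component:
  assumes s: "(A,u,v) \<in> \<R>" and f: "saturated A u v"
    and w1: "arm A u v b p1" and z: "last p1 \<noteq> v"
    and w3: "arm A u v c P"
    and incu: "incident A u = {{u,b},{u,last p1},{u,c}}"
    and d: "c \<noteq> b" "c \<noteq> last p1"
  shows "dumbbell_graph (comp_verts A u) (comp_edges A u)"
proof -
  note pr = state_profile[OF s]
  have uv: "u \<noteq> v" using f pr(5) unfolding saturated_def by auto
  note f1 = arm_facts[OF w1] and f3 = arm_facts[OF w3]
  note cyc = arm_closes_cycle[OF w1 z uv]
  note P = arm_leaves_cycle[OF w1 z uv w3 incu d]
  obtain C2 where c2: "is_cycle A C2" "last C2 = v" "set C2 \<inter> ((set p1 \<union> set P) - {v}) = {}"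
    "incident A v \<subseteq> insert {P!(length P - 2), v} (cycle_edges C2)"
    "\<forall>x\<in>set C2. x \<noteq> v \<longrightarrow> incident A x \<subseteq> cycle_edges C2"
    using dumbbell_second_cycle[OF s f w1 z w3 incu d] by blast
  have ne1: "p1 \<noteq> []" and ne2: "C2 \<noteq> []" and ne3: "P \<noteq> []"
    using f1(2) f3(2) c2(1) unfolding is_cycle_def by auto
  have u1: "u \<in> set p1" using hd_in_set[OF ne1] f1(3) by simp
  have vP: "v \<in> set P" using last_in_set[OF ne3] P(1) by simp
  have vC2: "v \<in> set C2" using last_in_set[OF ne2] c2(2) by simp
  have D12: "set p1 \<inter> set C2 = {}" using c2(3) cyc(3) by auto
  have PC2: "set P \<inter> set C2 = {v}" using c2(3) vP vC2 by auto
  define X where "X = set p1 \<union> set C2 \<union> set P"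
  define L where "L = cycle_edges p1 \<union> cycle_edges C2 \<union> path_edges P"
  have s1: "cycle_edges p1 \<subseteq> L" and s2: "cycle_edges C2 \<subseteq> L" and s3: "path_edges P \<subseteq> L"
    unfolding L_def by auto
  have LA: "L \<subseteq> A" unfolding L_def using cyc(1) c2(1) f3(5) unfolding is_cycle_def by auto
  have h1: "\<forall>x\<in>X. incident A x \<subseteq> L"
  proof
    fix x assume x: "x \<in> X"
    consider "x = u" | "x = v" | "x \<in> set p1 - {u}" | "x \<in> set C2 - {v}" | "x \<in> set P - {u, v}"
      using x unfolding X_def by auto
    then show "incident A x \<subseteq> L"
    proof cases
      case 1
      have "{u,b} \<in> L" using hd_edge_in[OF f1(2)] f1(3,4) path_edges_sub_cycle_edges s1 by auto
      moreover have "{u,last p1} \<in> L" using cyc(2) s1 by (auto simp: insert_commute)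
      moreover have "{u,c} \<in> L" using hd_edge_in[OF f3(2)] f3(3,4) s3 by auto
      ultimately show ?thesis using incu 1 by auto
    next
      case 2 then show ?thesis using c2(4) arm_pre_last(4)[OF w3 P(1)] s2 s3 by auto
    next
      case 3 then show ?thesis using cyc(4) s1 by blast
    next
      case 4 then show ?thesis using c2(5) s2 by blast
    next
      case 5 then show ?thesis using arm_inner[OF w3, of x] P(1) s3 by auto
    qed
  qed
  have h2: "\<forall>e\<in>L. e \<subseteq> X"
    unfolding L_def X_def using cycle_edges_sub[OF ne1] cycle_edges_sub[OF ne2] path_edges_subset by blast
  have h3: "\<forall>x\<in>X. (u, x) \<in> (adj_rel L)\<^sup>*"
  proof
    fix x assume x: "x \<in> X"
    have uv': "(u, v) \<in> (adj_rel L)\<^sup>*" using path_reach_mem[OF s3 vP] f3(3) by simp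
    consider "x \<in> set p1" | "x \<in> set C2" | "x \<in> set P" using x unfolding X_def by auto
    then show "(u, x) \<in> (adj_rel L)\<^sup>*"
    proof cases
      case 1 then show ?thesis using path_reach_mem[OF order.trans[OF path_edges_sub_cycle_edges s1]] f1(3) by metis
    next
      case 2
      then have "(v, x) \<in> (adj_rel L)\<^sup>*" using cycle_reach[OF s2] c2(2) by metis
      with uv' show ?thesis by (rule rtrancl_trans)
    next
      case 3 then show ?thesis using path_reach_mem[OF s3] f3(3) by metis
    qed
  qed
  have cl: "comp_verts A u = X" "comp_edges A u = L"
    using comp_closure[OF LA _ h1 h2 h3 edges_nonempty[OF pr(1)]] u1 unfolding X_def by auto
  have "is_cycle L p1" "is_cycle L C2" using is_cycle_sub[OF cyc(1) s1] is_cycle_sub[OF c2(1) s2] .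
  moreover have "is_path L P" using f3(1) ne3 s3 unfolding is_path_def by auto
  ultimately show ?thesis unfolding dumbbell_graph_def cl
    using D12 f3(2,3) P PC2 X_def L_def by blast
qed

lemma deg3_neighbours:
  assumes AE: "A \<subseteq> E" and du: "deg A u = 3"
  obtains b1 b2 b3 where "incident A u = {{u,b1},{u,b2},{u,b3}}" "b1 \<noteq> b2" "b1 \<noteq> b3" "b2 \<noteq> b3"
proof -
  obtain e1 e2 e3 where ee: "incident A u = {e1,e2,e3}" "e1 \<noteq> e2" "e2 \<noteq> e3" "e1 \<noteq> e3"
    using du unfolding deg_def card_3_iff by blast
  have "e1 \<in> A" "u \<in> e1" "e2 \<in> A" "u \<in> e2" "e3 \<in> A" "u \<in> e3" using ee(1) unfolding incident_def by blast+
  then obtain b1 b2 b3 where "e1 = {u,b1}" "e2 = {u,b2}" "e3 = {u,b3}" using edge_at AE by (metis subsetD)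
  then show ?thesis using that ee by auto
qed

lemma returning_arm_dumbbell:
  assumes s: "(A,u,v) \<in> \<R>" and f: "saturated A u v"
    and incu: "incident A u = {{u,b1},{u,b2},{u,b3}}" and d: "b1 \<noteq> b2" "b1 \<noteq> b3" "b2 \<noteq> b3"
    and b: "b \<in> {b1,b2,b3}" and w: "arm A u v b p" and lb: "last p \<noteq> v"
  shows "dumbbell_graph (comp_verts A u) (comp_edges A u)"
proof -
  have nb: "x \<in> {b1,b2,b3}" if "{u,x} \<in> A" for x
  proof -
    have "{u,x} \<in> incident A u" using that unfolding incident_def by simp
    then show ?thesis using incu by (auto simp: doubleton_eq_iff)
  qed
  have bA: "{u,x} \<in> A" if "x \<in> {b1,b2,b3}" for x using that incu unfolding incident_def by auto
  have zf: "last p \<noteq> b" "{u, last p} \<in> A" using arm_facts(7)[OF w] lb by auto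
  obtain c where c: "c \<in> {b1,b2,b3}" "c \<noteq> b" "c \<noteq> last p"
    using b nb[OF zf(2)] d zf(1) by blast
  obtain P where wc: "arm A u v c P" using arm_exists[OF s f bA[OF c(1)]] by blast
  have "incident A u = {{u,b},{u,last p},{u,c}}"
  proof (rule card3_eq_triple)
    show "finite (incident A u)" using finite_incident[OF finA[OF state_profile(1)[OF s]]] .
    show "card (incident A u) = 3" using f unfolding saturated_def deg_def by simp
    show "{u,b} \<in> incident A u" "{u,last p} \<in> incident A u" "{u,c} \<in> incident A u"
      using bA[OF b] zf(2) bA[OF c(1)] unfolding incident_def by auto
    show "{u,b} \<noteq> {u,last p}" "{u,b} \<noteq> {u,c}" "{u,last p} \<noteq> {u,c}"
      using zf(1) c(2,3) by (auto simp: doubleton_eq_iff)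
  qed
  then show ?thesis using dumbbell_component[OF s f w lb wc _ c(2) c(3)] by simp
qed

text \<open>Saturated states lie in Theta or D: follow the three arms at u; either all end at v
  (theta) or one returns to u (dumbbell).\<close>

lemma saturated_theta_or_dumbbell:
  assumes s: "(A,u,v) \<in> \<R>" and f: "saturated A u v"
  shows "(A,u,v) \<in> class_Theta V E \<union> class_D V E"
proof -
  note pr = state_profile[OF s]
  obtain b1 b2 b3 where incu: "incident A u = {{u,b1},{u,b2},{u,b3}}" and d: "b1 \<noteq> b2" "b1 \<noteq> b3" "b2 \<noteq> b3"
    using deg3_neighbours[OF pr(1)] f unfolding saturated_def by blast
  have bA: "{u,b1} \<in> A" "{u,b2} \<in> A" "{u,b3} \<in> A" using incu unfolding incident_def by auto
  obtain P1 P2 P3 where w: "arm A u v b1 P1" "arm A u v b2 P2" "arm A u v b3 P3"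
    using arm_exists[OF s f bA(1)] arm_exists[OF s f bA(2)] arm_exists[OF s f bA(3)] by blast
  show ?thesis
  proof (cases "last P1 = v \<and> last P2 = v \<and> last P3 = v")
    case True
    then have "theta_graph (comp_verts A u) (comp_edges A u)"
      using theta_component[OF s f w _ _ _ incu d] by blast
    then show ?thesis using s unfolding class_Theta_def by simp
  next
    case False
    then have "dumbbell_graph (comp_verts A u) (comp_edges A u)"
      using returning_arm_dumbbell[OF s f incu d] w by blast
    then show ?thesis using s unfolding class_D_def by simp
  qed
qed

lemma classify:
  assumes "(A,u,v) \<in> \<R>"
  shows "saturated A u v \<Longrightarrow> (A,u,v) \<notin> class_E V E \<union> class_T V E \<and> (A,u,v) \<in> class_Theta V E \<union> class_D V E"
    "\<not> saturated A u v \<Longrightarrow> (A,u,v) \<in> class_E V E \<union> class_T V E"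
proof -
  show "saturated A u v \<Longrightarrow> (A,u,v) \<notin> class_E V E \<union> class_T V E \<and> (A,u,v) \<in> class_Theta V E \<union> class_D V E"
    using saturated_not_cycle_tadpole[OF assms] saturated_theta_or_dumbbell[OF assms] by blast
  show "(A,u,v) \<in> class_E V E \<union> class_T V E" if nf: "\<not> saturated A u v"
  proof (cases "u = v")
    case True then show ?thesis using diag_state_class_E assms by blast
  next
    case False then show ?thesis using unsaturated_class_T[OF assms nf] by blast
  qed
qed

section \<open>Positive transition probabilities\<close>

text \<open>A move has positive transition probability: its move probability is positive by the
  classification, and it contributes one non-negative summand of the transition probability.\<close>

lemma move_prob_nonneg: "(n::real) > 0 \<Longrightarrow> move_prob V E n s e \<ge> 0"
  unfolding move_prob_def by (cases s) auto

lemma sym_diff_single: "sym_diff A {e} = (if e \<in> A then A - {e} else insert e A)"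
  unfolding sym_diff_def by auto

lemma trans_prob_pos_u:
  assumes n: "(n::real) > 0" and e: "{u,w} \<in> E" and mp: "move_prob V E n (A,u,v) {u,w} > 0"
  shows "trans_prob V E n (A,u,v) (sym_diff A {{u,w}}, w, v) > 0"
proof -
  let ?t = "(sym_diff A {{u,w}}, w, v)"
  define g where "g u' = (if ?t = (sym_diff A {{u, u'}}, u', v) then move_prob V E n (A,u,v) {u, u'} else 0)" for u'
  define h where "h v' = (if ?t = (sym_diff A {{v, v'}}, u, v') then move_prob V E n (A,u,v) {v, v'} else 0)" for v'
  have fin1: "finite {u'. {u,u'} \<in> E}" using finite_subset[OF _ finV, of "{u'. {u,u'} \<in> E}"] edge_in_V by blast
  have g0: "g x \<ge> 0" for x unfolding g_def using move_prob_nonneg[OF n] by simp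
  have h0: "h x \<ge> 0" for x unfolding h_def using move_prob_nonneg[OF n] by simp
  have "g w \<le> sum g {u'. {u,u'} \<in> E}" using member_le_sum[of w _ g] e g0 fin1 by simp
  moreover have "g w > 0" unfolding g_def using mp by simp
  moreover have "sum h {v'. {v,v'} \<in> E} \<ge> 0" using h0 by (simp add: sum_nonneg)
  moreover have "trans_prob V E n (A,u,v) ?t = sum g {u'. {u,u'} \<in> E} + sum h {v'. {v,v'} \<in> E}"
    unfolding trans_prob_def g_def h_def by simp
  ultimately show ?thesis by linarith
qed

lemma trans_prob_pos_v:
  assumes n: "(n::real) > 0" and e: "{v,w} \<in> E" and mp: "move_prob V E n (A,u,v) {v,w} > 0"
  shows "trans_prob V E n (A,u,v) (sym_diff A {{v,w}}, u, w) > 0"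
proof -
  let ?t = "(sym_diff A {{v,w}}, u, w)"
  define g where "g u' = (if ?t = (sym_diff A {{u, u'}}, u', v) then move_prob V E n (A,u,v) {u, u'} else 0)" for u'
  define h where "h v' = (if ?t = (sym_diff A {{v, v'}}, u, v') then move_prob V E n (A,u,v) {v, v'} else 0)" for v'
  have fin1: "finite {v'. {v,v'} \<in> E}" using finite_subset[OF _ finV, of "{v'. {v,v'} \<in> E}"] edge_in_V by blast
  have g0: "g x \<ge> 0" for x unfolding g_def using move_prob_nonneg[OF n] by simp
  have h0: "h x \<ge> 0" for x unfolding h_def using move_prob_nonneg[OF n] by simp
  have "h w \<le> sum h {v'. {v,v'} \<in> E}" using member_le_sum[of w _ h] e h0 fin1 by simp
  moreover have "h w > 0" unfolding h_def using mp by simp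
  moreover have "sum g {u'. {u,u'} \<in> E} \<ge> 0" using g0 by (simp add: sum_nonneg)
  moreover have "trans_prob V E n (A,u,v) ?t = sum g {u'. {u,u'} \<in> E} + sum h {v'. {v,v'} \<in> E}"
    unfolding trans_prob_def g_def h_def by simp
  ultimately show ?thesis by linarith
qed

lemma move_prob_add_pos: "(A,u,v) \<in> class_E V E \<union> class_T V E \<Longrightarrow> e \<notin> A \<Longrightarrow> move_prob V E n (A,u,v) e > 0"
  unfolding move_prob_def by simp

lemma move_prob_del_pos: "(n::real) > 0 \<Longrightarrow> (A,u,v) \<notin> class_E V E \<union> class_T V E \<Longrightarrow> (A,u,v) \<in> class_Theta V E \<union> class_D V E
  \<Longrightarrow> e \<in> A \<Longrightarrow> move_prob V E n (A,u,v) e > 0"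
  unfolding move_prob_def by auto

lemma moves_positive:
  assumes n: "(n::real) > 0"
  shows "(s,t) \<in> moves \<Longrightarrow> trans_prob V E n s t > 0"
proof -
  have "((A0,u0,v0),(A1,u1,v1)) \<in> moves \<Longrightarrow> trans_prob V E n (A0,u0,v0) (A1,u1,v1) > 0" for A0 u0 v0 A1 u1 v1
  proof (induction rule: moves.induct)
    case (add_u A u v w)
    have "move_prob V E n (A,u,v) {u,w} > 0" using move_prob_add_pos classify(2)[OF add_u(1) add_u(2)] add_u(4) by blast
    then have "trans_prob V E n (A,u,v) (sym_diff A {{u,w}}, w, v) > 0" by (rule trans_prob_pos_u[OF n add_u(3)])
    moreover have "sym_diff A {{u,w}} = insert {u,w} A" using sym_diff_single[of A "{u,w}"] add_u(4) by simp
    ultimately show ?case by simp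
  next
    case (del_u A u v w)
    have eE: "{u,w} \<in> E" using del_u(3) state_profile(1)[OF del_u(1)] by auto
    have "move_prob V E n (A,u,v) {u,w} > 0" using move_prob_del_pos[OF n] classify(1)[OF del_u(1) del_u(2)] del_u(3) by blast
    then have "trans_prob V E n (A,u,v) (sym_diff A {{u,w}}, w, v) > 0" by (rule trans_prob_pos_u[OF n eE])
    moreover have "sym_diff A {{u,w}} = A - {{u,w}}" using sym_diff_single[of A "{u,w}"] del_u(3) by simp
    ultimately show ?case by simp
  next
    case (add_v A u v w)
    have "move_prob V E n (A,u,v) {v,w} > 0" using move_prob_add_pos classify(2)[OF add_v(1) add_v(2)] add_v(4) by blast
    then have "trans_prob V E n (A,u,v) (sym_diff A {{v,w}}, u, w) > 0" by (rule trans_prob_pos_v[OF n add_v(3)])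
    moreover have "sym_diff A {{v,w}} = insert {v,w} A" using sym_diff_single[of A "{v,w}"] add_v(4) by simp
    ultimately show ?case by simp
  next
    case (del_v A u v w)
    have eE: "{v,w} \<in> E" using del_v(3) state_profile(1)[OF del_v(1)] by auto
    have "move_prob V E n (A,u,v) {v,w} > 0" using move_prob_del_pos[OF n] classify(1)[OF del_v(1) del_v(2)] del_v(3) by blast
    then have "trans_prob V E n (A,u,v) (sym_diff A {{v,w}}, u, w) > 0" by (rule trans_prob_pos_v[OF n eE])
    moreover have "sym_diff A {{v,w}} = A - {{v,w}}" using sym_diff_single[of A "{v,w}"] del_v(3) by simp
    ultimately show ?case by simp
  qed
  then show "(s,t) \<in> moves \<Longrightarrow> trans_prob V E n s t > 0" by (cases s; cases t) auto
qed

text \<open>A non-empty state space yields a 2-factor: a diagonal state carries one directly, and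
  every other state is saturated or becomes saturated after one move.\<close>

lemma two_factor_from_state:
  assumes bip: "bipartite V E" and s: "(A,u,v) \<in> \<R>"
  shows "\<exists>F. two_factor F"
proof -
  note p = state_profile[OF s]
  consider "u = v" | "saturated A u v" | "u \<noteq> v" "\<not> saturated A u v" by blast
  then show ?thesis
  proof cases
    case 1 then show ?thesis using diag_state_two_factor s by blast
  next
    case 2 then show ?thesis using two_factor_exists[OF bip s] by blast
  next
    case 3
    then have "deg A u = 1 \<or> deg A v = 1" using p(6) unfolding saturated_def by auto
    then show ?thesis
    proof
      assume "deg A u = 1"
      then obtain y where "{u,y} \<in> E" "{u,y} \<notin> A" using deg1_non_edge[OF p(1) p(2)] by metis
      then show ?thesis using two_factor_exists[OF bip add_move_u[OF s 3(2)]] by blast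
    next
      assume "deg A v = 1"
      then obtain y where "{v,y} \<in> E" "{v,y} \<notin> A" using deg1_non_edge[OF p(1) p(3)] by metis
      then show ?thesis using two_factor_exists[OF bip add_move_v[OF s 3(2)]] by blast
    qed
  qed
qed

lemma irreducible:
  assumes n: "(n::real) > 0" and conn: "connected_graph V E" and bip: "bipartite V E"
  shows "irreducible_chain \<R> (trans_prob V E n)"
  unfolding irreducible_chain_def
proof (intro ballI)
  fix s s' assume s: "s \<in> \<R>" and s': "s' \<in> \<R>"
  obtain A u v where suv: "s = (A,u,v)" by (cases s) auto
  obtain F where F: "two_factor F" using two_factor_from_state[OF bip] s suv by blast
  have uV: "u \<in> V" using state_profile(2) s suv by simp
  have "(s, (F,u,u)) \<in> moves\<^sup>*" "(s', (F,u,u)) \<in> moves\<^sup>*"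
    using reach_base_state[OF F conn uV s] reach_base_state[OF F conn uV s'] by auto
  then have "(s, s') \<in> moves\<^sup>*" using moves_rtrancl_sym by (meson rtrancl_trans)
  moreover have "moves \<subseteq> {(x, y). x \<in> \<R> \<and> y \<in> \<R> \<and> trans_prob V E n x y > 0}"
    using moves_positive[OF n] moves_states by auto
  ultimately show "(s, s') \<in> {(x, y). x \<in> \<R> \<and> y \<in> \<R> \<and> trans_prob V E n x y > 0}\<^sup>*"
    using rtrancl_mono by blast
qed

end

theorem proposition2:
  fixes V :: "'a set" and E :: "'a set set" and n :: real
  assumes "simple_graph V E"
    and "connected_graph V E"
    and "bipartite V E"
    and "cubic V E"
    and "n > 0"
  shows "irreducible_chain (states V E) (trans_prob V E n)"
proof -
  interpret cubic_graph V E using assms(1,4) by unfold_locales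
  show ?thesis using irreducible[OF assms(5) assms(2) assms(3)] .
qed

end
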